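(* Let $W$ be a topologically free $\mathbb{C}[[\hbar]]$-module and let $U$ be an $\hbar$-adically quasi-compatible, $Y^\phi_{\mathcal E}$-closed $\mathbb{C}[[\hbar]]$-submodule of $\mathcal{E}_\hbar(W)$. Then both $[U]$ and $\overline U$ are $\hbar$-adically quasi-compatible and $Y^\phi_{\mathcal E}$-closed.
   Context: A $\mathbb{C}[[\hbar]]$-module is topologically free if isomorphic to $W_0[[\hbar]]$ for a vector space $W_0$. For a submodule $U$ of a topologically free $V$, $\overline U$ is its $\hbar$-adic closure and $[U]=\{v\in V:\hbar^nv\in U\text{ for some }n\ge0\}$. $\mathcal{E}^{(r)}_\hbar(W)$ is the set of $f\in(\mathrm{End}_{\mathbb{C}[[\hbar]]}W)[[x_1^{\pm1},\dots,x_r^{\pm1}]]$ whose reduction $\pi_n(f)$ mod $\hbar^n$ lies in $\mathrm{Hom}(W/\hbar^nW,(W/\hbar^nW)((x_1,\dots,x_r)))$ for all $n\ge1$; $\mathcal{E}_\hbar(W)=\mathcal{E}^{(1)}_\hbar(W)$. Fix $\phi(x,z)=e^{zp(x)\partial_x}x$, $0\ne p(x)\in\mathbb{C}((x))$. A sequence $(a_1,\dots,a_r)$ in $\mathrm{Hom}(M,M((x)))$ ($M$ a vector space) is quasi-compatible if some nonzero $f(x,y)\in\mathbb{C}((x,y))$ satisfies $\prod_{i<j}f(x_i,x_j)a_1(x_1)\cdots a_r(x_r)\in\mathrm{Hom}(M,M((x_1,\dots,x_r)))$; a subset of $\mathcal{E}_\hbar(W)$ is $\hbar$-adically quasi-compatible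 if the reductions mod $\hbar^n$ of each of its finite sequences are quasi-compatible for all $n$. For a quasi-compatible pair $(\alpha,\beta)$ over $M$, $Y^\phi_{\mathcal E}(\alpha(x),z)\beta(x)=\sum_m\alpha^\phi_m\beta\,z^{-m-1}:=\iota_{x,z}(1/f(\phi(x,z),x))(f(x_1,x)\alpha(x_1)\beta(x))|_{x_1=\phi(x,z)}$ for nonzero $f\in\mathbb{C}((x_1,x_2))$ with $f(x_1,x_2)\alpha(x_1)\beta(x_2)\in\mathrm{Hom}(M,M((x_1,x_2)))$; in $\mathcal{E}_\hbar(W)$, $\alpha^\phi_m\beta$ is the unique element with $\pi_n(\alpha^\phi_m\beta)=\pi_n(\alpha)^\phi_m\pi_n(\beta)$ for all $n$. A submodule is $Y^\phi_{\mathcal E}$-closed if it contains $\alpha^\phi_m\beta$ for all its elements $\alpha,\beta$ and $m\in\mathbb Z$. Closures and $[\cdot]$ are taken in $\mathcal{E}_\hbar(W)$. *)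

theory Defs
  imports Complex_Main "HOL-Computational_Algebra.Formal_Laurent_Series"
begin

text \<open>W0 is a complex vector space: a type 'v with scalar multiplication sc,
  assumed to satisfy vector_space sc.  The topologically free module W is
  W0[[h]], represented as nat => 'v (w = sum_i h^i w_i).  Scalars of C[[h]]
  are nat => complex.\<close>

type_synonym 'v hmod = "nat \<Rightarrow> 'v"
type_synonym 'v hop = "'v hmod \<Rightarrow> 'v hmod"
text \<open>Elements of (End W)[[x^{+-1}]]: coefficient of x^m is (a m).\<close>
type_synonym 'v hser = "int \<Rightarrow> 'v hop"

definition hsmult :: "(complex \<Rightarrow> 'v::ab_group_add \<Rightarrow> 'v) \<Rightarrow> (nat \<Rightarrow> complex) \<Rightarrow> 'v hmod \<Rightarrow> 'v hmod" where
  "hsmult sc c w = (\<lambda>n. \<Sum>i\<le>n. sc (c i) (w (n - i)))"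

definition hadd :: "'v::ab_group_add hmod \<Rightarrow> 'v hmod \<Rightarrow> 'v hmod" where
  "hadd v w = (\<lambda>n. v n + w n)"

definition hlinear :: "(complex \<Rightarrow> 'v::ab_group_add \<Rightarrow> 'v) \<Rightarrow> 'v hop \<Rightarrow> bool" where
  "hlinear sc A \<longleftrightarrow> (\<forall>v w. A (hadd v w) = hadd (A v) (A w)) \<and>
                    (\<forall>c w. A (hsmult sc c w) = hsmult sc c (A w))"

text \<open>E_h(W): reduction mod h^n (components i < n) lies in Hom(M, M((x))).\<close>
definition Eh :: "(complex \<Rightarrow> 'v::ab_group_add \<Rightarrow> 'v) \<Rightarrow> 'v hser set" where
  "Eh sc = {a. (\<forall>m. hlinear sc (a m)) \<and>
     (\<forall>n\<ge>1. \<forall>w. \<exists>N. \<forall>m<N. \<forall>i<n. a m w i = 0)}"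

definition sadd :: "'v::ab_group_add hser \<Rightarrow> 'v hser \<Rightarrow> 'v hser" where
  "sadd a b = (\<lambda>m w. hadd (a m w) (b m w))"

definition ssmult :: "(complex \<Rightarrow> 'v::ab_group_add \<Rightarrow> 'v) \<Rightarrow> (nat \<Rightarrow> complex) \<Rightarrow> 'v hser \<Rightarrow> 'v hser" where
  "ssmult sc c a = (\<lambda>m w. hsmult sc c (a m w))"

definition szero :: "'v::ab_group_add hser" where
  "szero = (\<lambda>m w i. 0)"

definition hpow :: "nat \<Rightarrow> nat \<Rightarrow> complex" where
  "hpow n = (\<lambda>i. if i = n then 1 else 0)"

definition hsubmodule :: "(complex \<Rightarrow> 'v::ab_group_add \<Rightarrow> 'v) \<Rightarrow> 'v hser set \<Rightarrow> bool" where
  "hsubmodule sc U \<longleftrightarrow> U \<subseteq> Eh sc \<and> szero \<in> U \<and>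
     (\<forall>a\<in>U. \<forall>b\<in>U. sadd a b \<in> U) \<and> (\<forall>c. \<forall>a\<in>U. ssmult sc c a \<in> U)"

text \<open>[U] = {v in E_h(W). h^n v in U for some n}.\<close>
definition hsat :: "(complex \<Rightarrow> 'v::ab_group_add \<Rightarrow> 'v) \<Rightarrow> 'v hser set \<Rightarrow> 'v hser set" where
  "hsat sc U = {v \<in> Eh sc. \<exists>n. ssmult sc (hpow n) v \<in> U}"

text \<open>h-adic closure of U in E_h(W): v is in the closure iff every
  neighbourhood v + h^n E_h(W) meets U.\<close>
definition hclosure :: "(complex \<Rightarrow> 'v::ab_group_add \<Rightarrow> 'v) \<Rightarrow> 'v hser set \<Rightarrow> 'v hser set" where
  "hclosure sc U = {v \<in> Eh sc. \<forall>n. \<exists>u\<in>U. \<exists>e\<in>Eh sc. v = sadd u (ssmult sc (hpow n) e)}"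

text \<open>C((x,y)): coefficient functions with exponents bounded below.\<close>
definition laurent2 :: "(int \<Rightarrow> int \<Rightarrow> complex) \<Rightarrow> bool" where
  "laurent2 F \<longleftrightarrow> (\<exists>N. \<forall>a b. (a < N \<or> b < N) \<longrightarrow> F a b = 0)"

text \<open>r-variable series as functions on multi-indices (int lists of length r).\<close>
definition pairser :: "nat \<Rightarrow> nat \<Rightarrow> nat \<Rightarrow> (int \<Rightarrow> int \<Rightarrow> complex) \<Rightarrow> int list \<Rightarrow> complex" where
  "pairser r i j F = (\<lambda>ks. if length ks = r \<and> (\<forall>l<r. l \<noteq> i \<and> l \<noteq> j \<longrightarrow> ks ! l = 0)
                           then F (ks ! i) (ks ! j) else 0)"

definition conv :: "nat \<Rightarrow> (int list \<Rightarrow> complex) \<Rightarrow> (int list \<Rightarrow> complex) \<Rightarrow> int list \<Rightarrow> complex" where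
  "conv r P Q = (\<lambda>ns. \<Sum>ks\<in>{ks. length ks = r \<and> P ks \<noteq> 0 \<and> Q (map2 (-) ns ks) \<noteq> 0}.
                        P ks * Q (map2 (-) ns ks))"

definition unitser :: "nat \<Rightarrow> int list \<Rightarrow> complex" where
  "unitser r = (\<lambda>ks. if ks = replicate r 0 then 1 else 0)"

text \<open>prod_{i<j} f(x_i,x_j) as an r-variable series.\<close>
definition pairprod :: "nat \<Rightarrow> (int \<Rightarrow> int \<Rightarrow> complex) \<Rightarrow> int list \<Rightarrow> complex" where
  "pairprod r F = foldr (\<lambda>(i,j) acc. conv r (pairser r i j F) acc)
                        [(i,j). i \<leftarrow> [0..<r], j \<leftarrow> [Suc i..<r]] (unitser r)"

text \<open>a_1(x_1)...a_r(x_r): coefficient at (m_1,...,m_r) applied to w.\<close>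
definition opprod :: "'v hser list \<Rightarrow> int list \<Rightarrow> 'v hop" where
  "opprod as ms w = foldr (\<lambda>(a,m) acc. a m acc) (zip as ms) w"

text \<open>Quasi-compatibility of the reductions mod h^n (components i < n)
  of a sequence in E_h(W).\<close>
definition qc_at :: "(complex \<Rightarrow> 'v::ab_group_add \<Rightarrow> 'v) \<Rightarrow> nat \<Rightarrow> 'v hser list \<Rightarrow> bool" where
  "qc_at sc n as \<longleftrightarrow> (let r = length as in
     \<exists>F. laurent2 F \<and> F \<noteq> (\<lambda>a b. 0) \<and>
       (\<forall>w. \<exists>N. \<forall>ns. length ns = r \<longrightarrow> (\<exists>l<r. ns ! l < N) \<longrightarrow>
          (\<forall>i<n. (\<Sum>ks\<in>{ks. length ks = r \<and> pairprod r F ks \<noteq> 0 \<and>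
                              opprod as (map2 (-) ns ks) w i \<noteq> 0}.
                     sc (pairprod r F ks) (opprod as (map2 (-) ns ks) w i)) = 0)))"

definition hqc :: "(complex \<Rightarrow> 'v::ab_group_add \<Rightarrow> 'v) \<Rightarrow> 'v hser set \<Rightarrow> bool" where
  "hqc sc S \<longleftrightarrow> (\<forall>as. set as \<subseteq> S \<longrightarrow> (\<forall>n\<ge>1. qc_at sc n as))"

text \<open>phi(x,z) = exp(z p(x) d/dx) x in C((x))[[z]].\<close>
definition phiD :: "complex fls \<Rightarrow> complex fls \<Rightarrow> complex fls" where
  "phiD p g = p * fls_deriv g"

definition phi :: "complex fls \<Rightarrow> complex fls fps" where
  "phi p = Abs_fps (\<lambda>j. (phiD p ^^ j) fls_X / of_nat (fact j))"

text \<open>phi(x,z)^k for k in Z (inverse taken in C((x))[[z]], i.e. iota_{x,z}).\<close>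
definition phipow :: "complex fls \<Rightarrow> int \<Rightarrow> complex fls fps" where
  "phipow p k = (if k \<ge> 0 then phi p ^ nat k else inverse (phi p) ^ nat (- k))"

text \<open>Coefficient (k,l) of f(x_1,x_2) a(x_1) b(x_2) applied to w, component i.\<close>
definition fab :: "(complex \<Rightarrow> 'v::ab_group_add \<Rightarrow> 'v) \<Rightarrow> (int \<Rightarrow> int \<Rightarrow> complex) \<Rightarrow> 'v hser \<Rightarrow> 'v hser
                   \<Rightarrow> int \<Rightarrow> int \<Rightarrow> 'v hmod \<Rightarrow> nat \<Rightarrow> 'v" where
  "fab sc F a b k l w i = (\<Sum>(c,d)\<in>{(c,d). F c d \<noteq> 0 \<and> a (k - c) (b (l - d) w) i \<noteq> 0}.
                             sc (F c d) (a (k - c) (b (l - d) w) i))"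

text \<open>f is admissible for the pair (a,b) mod h^n.\<close>
definition pair_ok :: "(complex \<Rightarrow> 'v::ab_group_add \<Rightarrow> 'v) \<Rightarrow> nat \<Rightarrow> 'v hser \<Rightarrow> 'v hser \<Rightarrow> (int \<Rightarrow> int \<Rightarrow> complex) \<Rightarrow> bool" where
  "pair_ok sc n a b F \<longleftrightarrow> laurent2 F \<and> F \<noteq> (\<lambda>c d. 0) \<and>
     (\<forall>w. \<exists>N. \<forall>k l. (k < N \<or> l < N) \<longrightarrow> (\<forall>i<n. fab sc F a b k l w i = 0))"

text \<open>(f(x_1,x)a(x_1)b(x))|_{x_1=phi(x,z)}: coefficient of z^j x^t, applied to w, component i.\<close>
definition subst_phi :: "(complex \<Rightarrow> 'v::ab_group_add \<Rightarrow> 'v) \<Rightarrow> complex fls \<Rightarrow> (int \<Rightarrow> int \<Rightarrow> complex) \<Rightarrow> 'v hser \<Rightarrow> 'v hser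
                   \<Rightarrow> nat \<Rightarrow> int \<Rightarrow> 'v hmod \<Rightarrow> nat \<Rightarrow> 'v" where
  "subst_phi sc p F a b j t w i =
     (\<Sum>(k,l)\<in>{(k,l). fab sc F a b k l w i \<noteq> 0 \<and> fls_nth (fps_nth (phipow p k) j) (t - l) \<noteq> 0}.
        sc (fls_nth (fps_nth (phipow p k) j) (t - l)) (fab sc F a b k l w i))"

text \<open>f(phi(x,z),x) in C((x))[[z]].\<close>
definition f_phi :: "complex fls \<Rightarrow> (int \<Rightarrow> int \<Rightarrow> complex) \<Rightarrow> complex fls fps" where
  "f_phi p F = Abs_fps (\<lambda>j. Abs_fls (\<lambda>t.
      \<Sum>(c,d)\<in>{(c,d). F c d \<noteq> 0 \<and> fls_nth (fps_nth (phipow p c) j) (t - d) \<noteq> 0}.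
         F c d * fls_nth (fps_nth (phipow p c) j) (t - d)))"

text \<open>iota_{x,z}(1/f(phi(x,z),x)) in C((x))((z)).\<close>
definition inv_f_phi :: "complex fls \<Rightarrow> (int \<Rightarrow> int \<Rightarrow> complex) \<Rightarrow> complex fls fls" where
  "inv_f_phi p F = inverse (fps_to_fls (f_phi p F))"

text \<open>Coefficient of z^{-m-1} x^t of Y^phi_E(a(x),z)b(x) mod h^n (using f), at w, component i.\<close>
definition Ycoef :: "(complex \<Rightarrow> 'v::ab_group_add \<Rightarrow> 'v) \<Rightarrow> complex fls \<Rightarrow> (int \<Rightarrow> int \<Rightarrow> complex) \<Rightarrow> 'v hser \<Rightarrow> 'v hser
                   \<Rightarrow> int \<Rightarrow> int \<Rightarrow> 'v hmod \<Rightarrow> nat \<Rightarrow> 'v" where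
  "Ycoef sc p F a b m t w i =
     (\<Sum>(j1,t1)\<in>{(j1,t1). fls_nth (fls_nth (inv_f_phi p F) j1) t1 \<noteq> 0 \<and> - m - 1 - j1 \<ge> 0 \<and>
                         subst_phi sc p F a b (nat (- m - 1 - j1)) (t - t1) w i \<noteq> 0}.
        sc (fls_nth (fls_nth (inv_f_phi p F) j1) t1) (subst_phi sc p F a b (nat (- m - 1 - j1)) (t - t1) w i))"

text \<open>a^phi_m b in E_h(W): the unique element whose reduction mod h^n is the
  (phi)-product of the reductions, for every n (f chosen admissible mod h^n).\<close>
definition Yphi :: "(complex \<Rightarrow> 'v::ab_group_add \<Rightarrow> 'v) \<Rightarrow> complex fls \<Rightarrow> 'v hser \<Rightarrow> 'v hser \<Rightarrow> int \<Rightarrow> 'v hser" where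
  "Yphi sc p a b m = (THE g. g \<in> Eh sc \<and>
      (\<forall>n\<ge>1. \<forall>t w. \<forall>i<n. g t w i = Ycoef sc p (SOME F. pair_ok sc n a b F) a b m t w i))"

definition Yclosed :: "(complex \<Rightarrow> 'v::ab_group_add \<Rightarrow> 'v) \<Rightarrow> complex fls \<Rightarrow> 'v hser set \<Rightarrow> bool" where
  "Yclosed sc p U \<longleftrightarrow> (\<forall>a\<in>U. \<forall>b\<in>U. \<forall>m. Yphi sc p a b m \<in> U)"

end

theory Submission
  imports Defs "HOL-Library.Groups_Big_Fun"
begin

unbundle fps_syntax
no_notation suminf (binder \<open>\<Sum>\<close> 10)

text \<open>An element of \<open>[U]\<close> lies in \<open>U\<close> after multiplication by some \<open>\<hbar>\<^sup>k\<close>, and an element of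
  \<open>\<overline>U\<close> agrees with an element of \<open>U\<close> modulo any given \<open>\<hbar>\<^sup>n\<close>.  Quasi-compatibility only
  involves reductions modulo \<open>\<hbar>\<^sup>n\<close>, so it passes to \<open>[U]\<close> and \<open>\<overline>U\<close> directly.

  For \<open>Y\<^sup>\<phi>\<^sub>\<E>\<close>-closedness the crux is that \<open>a\<^sup>\<phi>\<^sub>m b\<close> modulo \<open>\<hbar>\<^sup>n\<close> does not depend on the
  admissible \<open>f\<close> used to compute it.  A linear functional on \<open>W\<^sub>0\<close> turns \<open>a(x\<^sub>1) b(x) w\<close> into a
  scalar series \<open>\<Lambda>(x\<^sub>1,x)\<close>, and the claim becomes an identity of Laurent series: the substitution
  \<open>x\<^sub>1 \<mapsto> \<phi>(x,z)\<close> is a ring homomorphism on two-variable Laurent series with support bounded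
  below, and it kills no nonzero \<open>f\<close>, because the initial part of \<open>\<phi>\<^sup>k\<close> is \<open>\<psi>\<^sup>k\<close> for a power
  series \<open>\<psi> = 1 + p\<^sub>0 z + \<dots>\<close> whose powers are linearly independent.  Hence
  \<open>f(\<phi>,x)\<^sup>-\<^sup>1 (f\<Lambda>)(\<phi>,x) = g(\<phi>,x)\<^sup>-\<^sup>1 (g\<Lambda>)(\<phi>,x)\<close> for admissible \<open>f, g\<close>, and functionals separate
  points.  Independence of \<open>f\<close> then yields \<open>(\<hbar>\<^sup>k a)\<^sup>\<phi>\<^sub>m (\<hbar>\<^sup>l b) = \<hbar>\<^sup>k\<^sup>+\<^sup>l a\<^sup>\<phi>\<^sub>m b\<close> and shows
  that \<open>a\<^sup>\<phi>\<^sub>m b\<close> modulo \<open>\<hbar>\<^sup>n\<close> only depends on \<open>a\<close> and \<open>b\<close> modulo \<open>\<hbar>\<^sup>n\<close>.\<close>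

lemma finite_support_subset:
  "finite A \<Longrightarrow> (\<And>x. f x \<noteq> 0 \<Longrightarrow> x \<in> A) \<Longrightarrow> finite {x. f x \<noteq> 0}"
  by (rule finite_subset[of _ A]) auto

lemma Sum_any_cartesian:
  fixes g :: "'a \<Rightarrow> 'b \<Rightarrow> 'c::comm_monoid_add"
  assumes "finite A" "finite B" "\<And>a b. g a b \<noteq> 0 \<Longrightarrow> a \<in> A \<and> b \<in> B"
  shows "(\<Sum>a. \<Sum>b. g a b) = (\<Sum>(a, b). g a b)"
  by (rule Sum_any.cartesian_product[of "A \<times> B"]) (use assms in auto)

lemma Sum_any_cartesian_pairs:
  fixes g :: "'a \<Rightarrow> 'b \<Rightarrow> 'c \<Rightarrow> 'd \<Rightarrow> 'e::comm_monoid_add"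
  assumes "finite A" "finite B"
    and "\<And>a1 a2 b1 b2. g a1 a2 b1 b2 \<noteq> 0 \<Longrightarrow> (a1, a2) \<in> A \<and> (b1, b2) \<in> B"
  shows "(\<Sum>(a1, a2). \<Sum>(b1, b2). g a1 a2 b1 b2) = (\<Sum>((a1, a2), (b1, b2)). g a1 a2 b1 b2)"
proof -
  let ?h = "\<lambda>a b. g (fst a) (snd a) (fst b) (snd b)"
  have "(\<Sum>a. \<Sum>b. ?h a b) = (\<Sum>(a, b). ?h a b)"
    by (rule Sum_any_cartesian[OF assms(1,2)]) (use assms(3) in force)
  then show ?thesis by (simp add: split_def)
qed

lemma Sum_any_swap_pairs:
  fixes g :: "'t \<Rightarrow> 'a \<Rightarrow> 'b \<Rightarrow> 'c \<Rightarrow> 'd \<Rightarrow> 'e::comm_monoid_add"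
  assumes "finite A" "finite B"
    and "\<And>t a1 a2 b1 b2. g t a1 a2 b1 b2 \<noteq> 0 \<Longrightarrow> t \<in> A \<and> ((a1, a2), (b1, b2)) \<in> B"
  shows "(\<Sum>t. \<Sum>((a1, a2), (b1, b2)). g t a1 a2 b1 b2) =
         (\<Sum>((a1, a2), (b1, b2)). \<Sum>t. g t a1 a2 b1 b2)"
proof -
  let ?h = "\<lambda>t x. g t (fst (fst x)) (snd (fst x)) (fst (snd x)) (snd (snd x))"
  have "(\<Sum>t. \<Sum>x. ?h t x) = (\<Sum>x. \<Sum>t. ?h t x)"
    by (rule Sum_any.swap[of "A \<times> B"]) (use assms in auto)
  then show ?thesis by (simp add: split_def)
qed

lemma sum_Sum_any_swap:
  fixes g :: "'i \<Rightarrow> 'a \<Rightarrow> 'c::comm_monoid_add"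
  assumes "finite I" "\<And>i. i \<in> I \<Longrightarrow> finite {x. g i x \<noteq> 0}"
  shows "(\<Sum>i\<in>I. Sum_any (g i)) = (\<Sum>x. \<Sum>i\<in>I. g i x)"
  using assms
proof (induction I rule: finite_induct)
  case (insert i I)
  have "finite {x. (\<Sum>i\<in>I. g i x) \<noteq> 0}"
    by (rule finite_subset[of _ "\<Union>i\<in>I. {x. g i x \<noteq> 0}"])
       (use insert in \<open>auto elim: sum.not_neutral_contains_not_neutral\<close>)
  then show ?case
    using insert by (simp add: Sum_any.distrib[symmetric])
qed simp

lemma Sum_any_mult_left:
  fixes c :: "'a::semiring_no_zero_divisors"
  shows "(\<Sum>x. c * f x) = c * (\<Sum>x. f x)"
proof (cases "c = 0")
  case False
  then have "{x. c * f x \<noteq> 0} = {x. f x \<noteq> 0}" by auto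
  then show ?thesis by (simp add: Sum_any.expand_set sum_distrib_left)
qed simp

lemma Sum_any_mult_right:
  fixes c :: "'a::semiring_no_zero_divisors"
  shows "(\<Sum>x. f x * c) = (\<Sum>x. f x) * c"
proof (cases "c = 0")
  case False
  then have "{x. f x * c \<noteq> 0} = {x. f x \<noteq> 0}" by auto
  then show ?thesis by (simp add: Sum_any.expand_set sum_distrib_right)
qed simp

lemma fls_nth_Sum_any:
  assumes "finite {x. g x \<noteq> 0}"
  shows "Sum_any g $$ n = (\<Sum>x. g x $$ n)"
proof -
  have "Sum_any g $$ n = (\<Sum>x\<in>{x. g x \<noteq> 0}. g x $$ n)"
    by (simp add: Sum_any.expand_set fls_nth_sum)
  also have "\<dots> = (\<Sum>x. g x $$ n)"
    by (rule Sum_any.expand_superset[symmetric]) (use assms in auto)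
  finally show ?thesis .
qed

lemma fls_times_nth_below:
  fixes f g :: "'a::comm_ring_1 fls"
  assumes "\<forall>n<A. f $$ n = 0" "\<forall>n<B. g $$ n = 0" "n < A + B"
  shows "(f * g) $$ n = 0"
proof (cases "f = 0 \<or> g = 0")
  case False
  then have "A \<le> fls_subdegree f" "B \<le> fls_subdegree g"
    using assms fls_subdegree_geI by auto
  with assms(3) show ?thesis
    by (intro fls_times_nth_eq0) linarith
qed auto

lemma fls_times_nth_Sum_any:
  fixes f g :: "'a::comm_ring_1 fls"
  shows "(f * g) $$ n = (\<Sum>i. f $$ i * g $$ (n - i))"
proof -
  have "{i. f $$ i * g $$ (n - i) \<noteq> 0} \<subseteq> {fls_subdegree f..n - fls_subdegree g}"
  proof
    fix i assume "i \<in> {i. f $$ i * g $$ (n - i) \<noteq> 0}"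
    then have "fls_subdegree f \<le> i" "fls_subdegree g \<le> n - i"
      by (auto intro: fls_subdegree_leI)
    then show "i \<in> {fls_subdegree f..n - fls_subdegree g}" by auto
  qed
  then show ?thesis
    by (simp add: fls_times_nth(2) Sum_any.expand_superset[of "{fls_subdegree f..n - fls_subdegree g}"])
qed

lemma fls_times_nth_at_bounds:
  fixes f g :: "'a::comm_ring_1 fls"
  assumes "\<forall>n<A. f $$ n = 0" "\<forall>n<B. g $$ n = 0"
  shows "(f * g) $$ (A + B) = f $$ A * g $$ B"
proof -
  have "(f * g) $$ (A + B) = (\<Sum>i. if i = A then f $$ A * g $$ B else 0)"
    unfolding fls_times_nth_Sum_any
  proof (rule Sum_any.cong)
    fix i show "f $$ i * g $$ (A + B - i) = (if i = A then f $$ A * g $$ B else 0)"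
      using assms by (cases "i < A") (auto simp: not_less)
  qed
  then show ?thesis by simp
qed

lemma fls_fls_times_nth:
  fixes X Y :: "'a::comm_ring_1 fls fls"
  shows "(X * Y) $$ L $$ K = (\<Sum>(l, k). X $$ l $$ k * Y $$ (L - l) $$ (K - k))"
proof -
  define A where "A = {fls_subdegree X..L - fls_subdegree Y}"
  have rows: "l \<in> A" if "X $$ l \<noteq> 0" "Y $$ (L - l) \<noteq> 0" for l
    using that fls_subdegree_leI unfolding A_def by fastforce
  have "(X * Y) $$ L $$ K = (\<Sum>l. X $$ l * Y $$ (L - l)) $$ K"
    by (simp only: fls_times_nth_Sum_any)
  also have "\<dots> = (\<Sum>l. (X $$ l * Y $$ (L - l)) $$ K)"
  proof (rule fls_nth_Sum_any, rule finite_support_subset[of A])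
    fix l assume "X $$ l * Y $$ (L - l) \<noteq> 0"
    then have "X $$ l \<noteq> 0" "Y $$ (L - l) \<noteq> 0" by auto
    then show "l \<in> A" by (rule rows)
  qed (simp add: A_def)
  also have "\<dots> = (\<Sum>l. \<Sum>k. X $$ l $$ k * Y $$ (L - l) $$ (K - k))"
    by (simp add: fls_times_nth_Sum_any)
  also have "\<dots> = (\<Sum>(l, k). X $$ l $$ k * Y $$ (L - l) $$ (K - k))"
  proof (rule Sum_any_cartesian[of A "\<Union>l\<in>A. {fls_subdegree (X $$ l)..K - fls_subdegree (Y $$ (L - l))}"])
    fix l k assume "X $$ l $$ k * Y $$ (L - l) $$ (K - k) \<noteq> 0"
    then have nz: "X $$ l $$ k \<noteq> 0" "Y $$ (L - l) $$ (K - k) \<noteq> 0" by auto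
    then have "X $$ l \<noteq> 0" "Y $$ (L - l) \<noteq> 0" by auto
    then have "l \<in> A" by (rule rows)
    moreover have "k \<in> {fls_subdegree (X $$ l)..K - fls_subdegree (Y $$ (L - l))}"
      using nz fls_subdegree_leI by fastforce
    ultimately show "l \<in> A \<and> k \<in> (\<Union>l\<in>A. {fls_subdegree (X $$ l)..K - fls_subdegree (Y $$ (L - l))})"
      by blast
  qed (auto simp: A_def)
  finally show ?thesis .
qed

lemma fls_nth_divide_of_nat: "((f::complex fls) / of_nat c) $$ s = f $$ s / of_nat c"
proof -
  have "f / of_nat c = f * fls_const (inverse (of_nat c))"
    by (simp only: divide_inverse fls_of_nat fls_inverse_const)
  then have "(f / of_nat c) $$ s = f $$ s * inverse (of_nat c)"
    by (simp only: fls_mult_const_nth(2))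
  then show ?thesis by (simp add: divide_inverse)
qed

lemma fps_to_fls_sum: "fps_to_fls (\<Sum>j\<in>J. f j) = (\<Sum>j\<in>J. fps_to_fls (f j))"
  by (induction J rule: infinite_finite_induct) auto

lemma fps_to_fls_const_mult:
  fixes f :: "'a::comm_ring_1 fps"
  shows "fps_to_fls (fps_const c * f) = fls_const c * fps_to_fls f"
  by (simp only: fls_times_fps_to_fls fps_const_to_fls)

definition int_pow :: "'a::{comm_ring_1,inverse} \<Rightarrow> int \<Rightarrow> 'a" where
  "int_pow u k = (if k \<ge> 0 then u ^ nat k else inverse u ^ nat (- k))"

lemma int_pow_add:
  fixes u :: "'a::{comm_ring_1,inverse}"
  assumes u: "u * inverse u = 1"
  shows "int_pow u a * int_pow u b = int_pow u (a + b)"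
proof -
  have cancel: "u ^ m * inverse u ^ n = u ^ m' * inverse u ^ n'" if "m + n' = m' + n" for m n m' n'
  proof -
    have "u ^ m * inverse u ^ n = u ^ m * inverse u ^ n * (u * inverse u) ^ n'" using u by simp
    also have "\<dots> = u ^ (m + n') * inverse u ^ (n + n')"
      by (simp add: power_add power_mult_distrib algebra_simps)
    also have "\<dots> = u ^ m' * inverse u ^ n' * (u * inverse u) ^ n"
      using that by (simp add: power_add power_mult_distrib algebra_simps)
    finally show ?thesis using u by simp
  qed
  have "int_pow u a * int_pow u b = u ^ (nat a + nat b) * inverse u ^ (nat (- a) + nat (- b))"
    by (simp add: int_pow_def power_add)
  also have "\<dots> = u ^ nat (a + b) * inverse u ^ nat (- (a + b))"
    by (rule cancel) linarith
  finally show ?thesis by (simp add: int_pow_def)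
qed

lemma fps_powers_independent:
  fixes q :: "complex fps"
  assumes q1: "q $ 1 \<noteq> 0" and zero: "(\<Sum>n\<le>d. fps_const (c n) * q ^ n) = 0"
  shows "\<forall>n\<le>d. c n = 0"
  using zero
proof (induction d arbitrary: c)
  case 0
  then show ?case by simp
next
  case (Suc d)
  have "fps_deriv q $ 0 = q $ 1" by simp
  then have dq: "fps_deriv q \<noteq> 0" using q1 by (metis fps_zero_nth)
  have "fps_deriv (\<Sum>n\<le>Suc d. fps_const (c n) * q ^ n) = 0" using Suc.prems by simp
  then have "(\<Sum>n\<le>Suc d. fps_const (c n) * (fps_const (of_nat n) * fps_deriv q * q ^ (n - 1))) = 0"
    by (simp only: fps_deriv_sum fps_deriv_mult_const_left fps_deriv_power)
  then have "(\<Sum>m\<le>d. fps_const (c (Suc m)) * (fps_const (of_nat (Suc m)) * fps_deriv q * q ^ m)) = 0"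
    by (simp only: sum.atMost_Suc_shift) (simp del: of_nat_Suc)
  moreover have "(\<Sum>m\<le>d. fps_const (c (Suc m)) * (fps_const (of_nat (Suc m)) * fps_deriv q * q ^ m)) =
      (\<Sum>m\<le>d. fps_const (c (Suc m) * of_nat (Suc m)) * q ^ m) * fps_deriv q"
    unfolding sum_distrib_right by (rule sum.cong) (simp_all add: mult_ac del: of_nat_Suc)
  ultimately have "(\<Sum>m\<le>d. fps_const (c (Suc m) * of_nat (Suc m)) * q ^ m) = 0"
    using dq by simp
  then have high: "\<forall>m\<le>d. c (Suc m) = 0"
    using Suc.IH by (metis mult_eq_0_iff of_nat_eq_0_iff nat.distinct(1))
  then have "(\<Sum>m\<le>d. fps_const (c (Suc m)) * q ^ Suc m) = 0" by simp
  then have "(\<Sum>n\<le>Suc d. fps_const (c n) * q ^ n) = fps_const (c 0)"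
    by (simp only: sum.atMost_Suc_shift) simp
  then have "c 0 = 0" using Suc.prems by simp
  with high show ?case by (auto simp: le_eq_less_or_eq less_Suc_eq_0_disj)
qed

lemma fps_powers_independent_on:
  fixes q :: "complex fps"
  assumes q1: "q $ 1 \<noteq> 0" and A: "finite A" and zero: "(\<Sum>n\<in>A. fps_const (c n) * q ^ n) = 0"
  shows "\<forall>n\<in>A. c n = 0"
proof -
  define c' where "c' n = (if n \<in> A then c n else 0)" for n
  have "(\<Sum>n\<le>Max (insert 0 A). fps_const (c' n) * q ^ n) = (\<Sum>n\<in>A. fps_const (c n) * q ^ n)"
    using A by (intro sum.mono_neutral_cong_right) (auto simp: c'_def)
  then have c': "\<forall>n\<le>Max (insert 0 A). c' n = 0"
    using fps_powers_independent[OF q1] zero by simp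
  show ?thesis
  proof
    fix n assume n: "n \<in> A"
    with A have "n \<le> Max (insert 0 A)" by simp
    with c' have "c' n = 0" by blast
    with n show "c n = 0" by (simp add: c'_def)
  qed
qed

lemma fps_int_pow_independent:
  fixes q :: "complex fps"
  assumes q0: "q $ 0 = 1" and q1: "q $ 1 \<noteq> 0" and K: "finite K"
    and zero: "(\<Sum>k\<in>K. fps_const (c k) * int_pow q k) = 0"
  shows "\<forall>k\<in>K. c k = 0"
proof -
  define k0 where "k0 = Min (insert 0 K)"
  have k0: "\<forall>k\<in>K. k0 \<le> k" using K by (simp add: k0_def)
  have inj: "inj_on (\<lambda>k. nat (k - k0)) K"
    using k0 by (auto simp: inj_on_def eq_nat_nat_iff)
  have qi: "q * inverse q = 1" by (rule inverse_mult_eq_1') (simp add: q0)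
  txt \<open>Multiplying by \<open>q\<^sup>-\<^sup>k\<^sup>0\<close> turns the relation into one between natural powers.\<close>
  have "int_pow q k * int_pow q (- k0) = q ^ nat (k - k0)" if "k \<in> K" for k
    using int_pow_add[OF qi, of k "- k0"] k0 that by (simp add: int_pow_def)
  then have "0 = (\<Sum>k\<in>K. fps_const (c k) * q ^ nat (k - k0))"
    using zero[THEN arg_cong[where f = "\<lambda>x. x * int_pow q (- k0)"]]
    by (simp add: sum_distrib_right mult.assoc)
  also have "\<dots> = (\<Sum>n\<in>(\<lambda>k. nat (k - k0)) ` K. fps_const (c (k0 + int n)) * q ^ n)"
    using k0 by (simp add: sum.reindex[OF inj])
  finally have "\<forall>n\<in>(\<lambda>k. nat (k - k0)) ` K. c (k0 + int n) = 0"
    using fps_powers_independent_on[OF q1 finite_imageI[OF K]] by metis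
  then show ?thesis using k0 by auto
qed

section \<open>Weights of the powers of \<open>\<phi>\<close>\<close>

lemma phipow_int_pow: "phipow p k = int_pow (phi p) k"
  by (simp add: phipow_def int_pow_def)

locale phi_flow =
  fixes p :: "complex fls"
  assumes p_nonzero: "p \<noteq> 0"
begin

text \<open>Applying \<open>p(x)\<partial>\<^sub>x\<close> raises the \<open>x\<close>-order by at least \<open>ord p - 1\<close>, so the coefficient
  of \<open>z\<^sup>j\<close> in \<open>\<phi>(x,z)\<^sup>k\<close> has \<open>x\<close>-order at least \<open>k + j * ord_step\<close>.\<close>

definition ord_step :: int where
  "ord_step = fls_subdegree p - 1"

definition weight_ge :: "complex fls fps \<Rightarrow> int \<Rightarrow> bool" where
  "weight_ge P w \<longleftrightarrow> (\<forall>j s. s < w + int j * ord_step \<longrightarrow> P $ j $$ s = 0)"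

definition initial_part :: "int \<Rightarrow> complex fls fps \<Rightarrow> complex fps" where
  "initial_part w P = Abs_fps (\<lambda>j. P $ j $$ (w + int j * ord_step))"

lemma initial_part_nth [simp]: "initial_part w P $ j = P $ j $$ (w + int j * ord_step)"
  by (simp add: initial_part_def)

lemma initial_part_one: "initial_part 0 1 = 1"
  by (rule fps_ext) simp

lemma ord_step_split: "i \<le> j \<Longrightarrow> int j * ord_step = int i * ord_step + int (j - i) * ord_step"
  by (simp add: of_nat_diff algebra_simps)

lemma weight_ge_mult:
  assumes "weight_ge P a" "weight_ge Q b"
  shows "weight_ge (P * Q) (a + b)"
  unfolding weight_ge_def
proof (intro allI impI)
  fix j s assume s: "s < a + b + int j * ord_step"
  have "(P * Q) $ j $$ s = (\<Sum>i=0..j. (P $ i * Q $ (j - i)) $$ s)"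
    by (simp add: fps_mult_nth fls_nth_sum)
  also have "\<dots> = 0"
  proof (rule sum.neutral, intro ballI)
    fix i assume "i \<in> {0..j}"
    then show "(P $ i * Q $ (j - i)) $$ s = 0"
      using assms s ord_step_split[of i j]
      by (intro fls_times_nth_below[where A = "a + int i * ord_step"
                                       and B = "b + int (j - i) * ord_step"])
         (auto simp: weight_ge_def)
  qed
  finally show "(P * Q) $ j $$ s = 0" .
qed

lemma weight_ge_power: "weight_ge P a \<Longrightarrow> weight_ge (P ^ n) (int n * a)"
proof (induction n)
  case 0
  then show ?case by (auto simp: weight_ge_def)
next
  case (Suc n)
  then have "weight_ge (P * P ^ n) (a + int n * a)" using weight_ge_mult by blast
  then show ?case by (simp add: algebra_simps)
qed

lemma initial_part_mult:
  assumes "weight_ge P a" "weight_ge Q b"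
  shows "initial_part (a + b) (P * Q) = initial_part a P * initial_part b Q"
proof (rule fps_ext)
  fix j
  have "initial_part (a + b) (P * Q) $ j =
        (\<Sum>i=0..j. (P $ i * Q $ (j - i)) $$ (a + b + int j * ord_step))"
    by (simp add: fps_mult_nth fls_nth_sum)
  also have "\<dots> =
      (\<Sum>i=0..j. P $ i $$ (a + int i * ord_step) * Q $ (j - i) $$ (b + int (j - i) * ord_step))"
  proof (rule sum.cong[OF refl])
    fix i assume "i \<in> {0..j}"
    then have "a + b + int j * ord_step = (a + int i * ord_step) + (b + int (j - i) * ord_step)"
      using ord_step_split[of i j] by simp
    then show "(P $ i * Q $ (j - i)) $$ (a + b + int j * ord_step) =
               P $ i $$ (a + int i * ord_step) * Q $ (j - i) $$ (b + int (j - i) * ord_step)"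
      using assms by (simp only:) (rule fls_times_nth_at_bounds; simp add: weight_ge_def)
  qed
  also have "\<dots> = (initial_part a P * initial_part b Q) $ j"
    by (simp add: fps_mult_nth)
  finally show "initial_part (a + b) (P * Q) $ j = (initial_part a P * initial_part b Q) $ j" .
qed

lemma initial_part_power:
  "weight_ge P a \<Longrightarrow> initial_part (int n * a) (P ^ n) = initial_part a P ^ n"
proof (induction n)
  case 0
  then show ?case by (simp add: fps_ext)
next
  case (Suc n)
  have "initial_part (a + int n * a) (P * P ^ n) = initial_part a P * initial_part (int n * a) (P ^ n)"
    by (rule initial_part_mult[OF Suc.prems weight_ge_power[OF Suc.prems]])
  then show ?case using Suc by (simp add: algebra_simps)
qed

lemma phi_nth: "phi p $ j = (phiD p ^^ j) fls_X / of_nat (fact j)"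
  by (simp add: phi_def)

lemma phi_nth_nth: "phi p $ j $$ s = (phiD p ^^ j) fls_X $$ s / of_nat (fact j)"
  by (simp only: phi_nth fls_nth_divide_of_nat)

lemma phi_0: "phi p $ 0 = fls_X"
  by (simp add: phi_def)

lemma phi_1: "phi p $ Suc 0 = p"
  by (simp add: phi_def phiD_def)

lemma inverse_phi_mult: "inverse (phi p) * phi p = 1"
  by (rule inverse_mult_eq_1) (simp add: phi_0)

lemma weight_ge_phi: "weight_ge (phi p) 1"
proof -
  have "(phiD p ^^ j) fls_X $$ s = 0" if "s < 1 + int j * ord_step" for j s
    using that
  proof (induction j arbitrary: s)
    case (Suc j)
    have "\<forall>s<fls_subdegree p. p $$ s = 0" by simp
    moreover have "\<forall>s < int j * ord_step. fls_deriv ((phiD p ^^ j) fls_X) $$ s = 0"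
      using Suc.IH by simp
    moreover have "s < fls_subdegree p + int j * ord_step"
      using Suc.prems by (simp add: ord_step_def algebra_simps)
    ultimately have "phiD p ((phiD p ^^ j) fls_X) $$ s = 0"
      unfolding phiD_def by (rule fls_times_nth_below)
    then show ?case by simp
  qed simp
  then show ?thesis by (simp add: weight_ge_def phi_nth_nth)
qed

lemma weight_ge_inverse_phi: "weight_ge (inverse (phi p)) (-1)"
  unfolding weight_ge_def
proof (rule allI)
  fix j
  show "\<forall>s. s < -1 + int j * ord_step \<longrightarrow> inverse (phi p) $ j $$ s = 0"
  proof (induction j rule: less_induct)
    case (less j)
    have X_inv: "\<forall>s < -1. inverse (phi p $ 0) $$ s = 0"
      by (simp add: phi_0 fls_inverse_X)
    show ?case
    proof (cases j)
      case 0
      then show ?thesis using X_inv by simp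
    next
      case (Suc k)
      define S where "S = (\<Sum>i = 1..j. phi p $ i * inverse (phi p) $ (j - i))"
      have S: "\<forall>s < int j * ord_step. S $$ s = 0"
      proof (intro allI impI)
        fix s assume s: "s < int j * ord_step"
        show "S $$ s = 0"
          unfolding S_def fls_nth_sum
        proof (rule sum.neutral, intro ballI)
          fix i assume i: "i \<in> {1..j}"
          then show "(phi p $ i * inverse (phi p) $ (j - i)) $$ s = 0"
            using s ord_step_split[of i j] weight_ge_phi less[of "j - i"]
            by (intro fls_times_nth_below[where A = "1 + int i * ord_step"
                                             and B = "-1 + int (j - i) * ord_step"])
               (auto simp: weight_ge_def)
        qed
      qed
      have "inverse (phi p) $ j = - inverse (phi p $ 0) * S"
        using Suc by (simp add: fps_inverse_def S_def)
      then show ?thesis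
        using X_inv S by (auto intro!: fls_times_nth_below[where A = "-1" and B = "int j * ord_step"])
    qed
  qed
qed

lemma weight_ge_phipow: "weight_ge (phipow p k) k"
  using weight_ge_power[OF weight_ge_phi, of "nat k"]
    weight_ge_power[OF weight_ge_inverse_phi, of "nat (- k)"]
  by (cases "k \<ge> 0") (simp_all add: phipow_def)

lemma phipow_nth_below: "s < k + int j * ord_step \<Longrightarrow> phipow p k $ j $$ s = 0"
  using weight_ge_phipow by (simp add: weight_ge_def)

lemma phipow_add: "phipow p a * phipow p b = phipow p (a + b)"
  unfolding phipow_int_pow
  by (rule int_pow_add) (simp add: inverse_phi_mult[unfolded mult.commute[of "inverse _"]])

definition psi :: "complex fps" where
  "psi = initial_part 1 (phi p)"

lemma psi_0: "psi $ 0 = 1"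
  by (simp add: psi_def phi_0)

lemma psi_1: "psi $ 1 \<noteq> 0"
  using p_nonzero by (simp add: psi_def phi_1 ord_step_def)

lemma initial_part_inverse_phi: "initial_part (-1) (inverse (phi p)) = inverse psi"
proof -
  have "initial_part (-1) (inverse (phi p)) * psi = 1"
    using initial_part_mult[OF weight_ge_inverse_phi weight_ge_phi]
    by (simp add: psi_def inverse_phi_mult initial_part_one)
  then show ?thesis
    by (metis fps_inverse_unique mult.commute)
qed

lemma initial_part_phipow: "initial_part k (phipow p k) = int_pow psi k"
proof (cases "k \<ge> 0")
  case True
  then show ?thesis
    using initial_part_power[OF weight_ge_phi, of "nat k"]
    by (simp add: phipow_def int_pow_def psi_def)
next
  case False
  then show ?thesis
    using initial_part_power[OF weight_ge_inverse_phi, of "nat (- k)"]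
    by (simp add: phipow_def int_pow_def initial_part_inverse_phi)
qed

lemma phipow_nth_initial: "phipow p k $ j $$ (k + int j * ord_step) = int_pow psi k $ j"
  using initial_part_phipow[of k] by (metis initial_part_nth)

end

section \<open>Substituting \<open>\<phi>\<close> into two-variable Laurent series\<close>

context phi_flow
begin

text \<open>A series \<open>X(x\<^sub>1, x)\<close> in two variables is stored with the coefficient of \<open>x\<^sup>l x\<^sub>1\<^sup>k\<close> at
  \<open>X $$ l $$ k\<close>; \<open>phi_subst X\<close> is \<open>X(\<phi>(x,z), x)\<close>.  For \<open>X\<close> with support bounded below
  each coefficient of \<open>phi_subst X\<close> is a finite sum, by \<open>phipow_nth_below\<close>.\<close>

definition supp_ge :: "int \<Rightarrow> complex fls fls \<Rightarrow> bool" where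
  "supp_ge N X \<longleftrightarrow> (\<forall>l k. l < N \<or> k < N \<longrightarrow> X $$ l $$ k = 0)"

abbreviation phi_coeff :: "int \<Rightarrow> nat \<Rightarrow> int \<Rightarrow> complex" where
  "phi_coeff k j s \<equiv> phipow p k $ j $$ s"

definition phi_subst :: "complex fls fls \<Rightarrow> complex fls fps" where
  "phi_subst X = Abs_fps (\<lambda>j. Abs_fls (\<lambda>t. \<Sum>(k, l). X $$ l $$ k * phi_coeff k j (t - l)))"

lemma phi_coeff_nonzero: "phi_coeff k j s \<noteq> 0 \<Longrightarrow> k + int j * ord_step \<le> s"
  using phipow_nth_below by (meson not_le)

lemma supp_geD: "supp_ge N X \<Longrightarrow> X $$ l $$ k \<noteq> 0 \<Longrightarrow> N \<le> l \<and> N \<le> k"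
  unfolding supp_ge_def by (meson not_le)

lemma supp_ge_mono: "supp_ge N X \<Longrightarrow> M \<le> N \<Longrightarrow> supp_ge M X"
  by (auto simp: supp_ge_def)

lemma supp_ge_add: "supp_ge N X \<Longrightarrow> supp_ge N Y \<Longrightarrow> supp_ge N (X + Y)"
  by (simp add: supp_ge_def)

lemma supp_ge_const_mult: "supp_ge N X \<Longrightarrow> supp_ge N (fls_const (fls_const c) * X)"
  by (simp add: supp_ge_def)

lemma supp_ge_mult:
  assumes X: "supp_ge N X" and Y: "supp_ge M Y"
  shows "supp_ge (N + M) (X * Y)"
  unfolding supp_ge_def
proof (intro allI impI)
  fix L K assume LK: "L < N + M \<or> K < N + M"
  have "(\<lambda>(l, k). X $$ l $$ k * Y $$ (L - l) $$ (K - k)) = (\<lambda>_. 0)"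
    using supp_geD[OF X] supp_geD[OF Y] LK by fastforce
  then show "(X * Y) $$ L $$ K = 0"
    by (simp add: fls_fls_times_nth)
qed

lemma phi_subst_term_nonzero:
  assumes "supp_ge N X" "X $$ l $$ k * phi_coeff k j (t - l) \<noteq> 0"
  shows "N \<le> k \<and> N \<le> l \<and> k + l \<le> t - int j * ord_step"
  using assms supp_geD[OF assms(1), of l k] phi_coeff_nonzero[of k j "t - l"] by auto

lemma finite_phi_subst_support:
  assumes "supp_ge N X"
  shows "finite {x. (\<lambda>(k, l). X $$ l $$ k * phi_coeff k j (t - l)) x \<noteq> 0}"
  by (rule finite_support_subset[of "{N..t - int j * ord_step - N} \<times> {N..t - int j * ord_step - N}"])
     (use phi_subst_term_nonzero[OF assms] in fastforce)+

lemma phi_subst_nth: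
  assumes X: "supp_ge N X"
  shows "phi_subst X $ j $$ t = (\<Sum>(k, l). X $$ l $$ k * phi_coeff k j (t - l))"
proof -
  have "(\<Sum>(k, l). X $$ l $$ k * phi_coeff k j (t - l)) = 0" if "t < 2 * N + int j * ord_step" for t
  proof -
    have "(\<lambda>(k, l). X $$ l $$ k * phi_coeff k j (t - l)) = (\<lambda>_. 0)"
      using phi_subst_term_nonzero[OF X] that by fastforce
    then show ?thesis by simp
  qed
  then show ?thesis
    unfolding phi_subst_def by (simp add: nth_Abs_fls_lower_bound[of "2 * N + int j * ord_step"])
qed

lemma phi_subst_add:
  assumes X: "supp_ge N X" and Y: "supp_ge N Y"
  shows "phi_subst (X + Y) = phi_subst X + phi_subst Y"
proof (rule fps_ext, rule fls_eqI)
  fix j t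
  have "phi_subst (X + Y) $ j $$ t =
    (\<Sum>x. (\<lambda>(k, l). X $$ l $$ k * phi_coeff k j (t - l)) x +
          (\<lambda>(k, l). Y $$ l $$ k * phi_coeff k j (t - l)) x)"
    unfolding phi_subst_nth[OF supp_ge_add[OF X Y]] by (rule Sum_any.cong) (auto simp: algebra_simps)
  also have "\<dots> = (phi_subst X + phi_subst Y) $ j $$ t"
    using finite_phi_subst_support[OF X] finite_phi_subst_support[OF Y]
    by (simp add: Sum_any.distrib phi_subst_nth[OF X] phi_subst_nth[OF Y])
  finally show "phi_subst (X + Y) $ j $$ t = (phi_subst X + phi_subst Y) $ j $$ t" .
qed

lemma phi_subst_const_mult:
  assumes X: "supp_ge N X"
  shows "phi_subst (fls_const (fls_const c) * X) = fps_const (fls_const c) * phi_subst X"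
proof (rule fps_ext, rule fls_eqI)
  fix j t
  have "phi_subst (fls_const (fls_const c) * X) $ j $$ t =
        (\<Sum>(k, l). c * (X $$ l $$ k * phi_coeff k j (t - l)))"
    unfolding phi_subst_nth[OF supp_ge_const_mult[OF X]] by (simp add: mult.assoc)
  also have "\<dots> = (fps_const (fls_const c) * phi_subst X) $ j $$ t"
    using finite_phi_subst_support[OF X]
    by (simp add: Sum_any_right_distrib case_prod_unfold phi_subst_nth[OF X])
  finally show "phi_subst (fls_const (fls_const c) * X) $ j $$ t =
                (fps_const (fls_const c) * phi_subst X) $ j $$ t" .
qed

lemma phi_subst_sum:
  assumes "finite J" "\<And>j. j \<in> J \<Longrightarrow> supp_ge N (X j)"
  shows "phi_subst (\<Sum>j\<in>J. X j) = (\<Sum>j\<in>J. phi_subst (X j)) \<and> supp_ge N (\<Sum>j\<in>J. X j)"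
  using assms
proof (induction J rule: finite_induct)
  case empty
  have "supp_ge N 0" by (simp add: supp_ge_def)
  then show ?case by (auto intro!: fps_ext fls_eqI simp: phi_subst_nth)
next
  case (insert x J)
  then have x: "supp_ge N (X x)" and J: "supp_ge N (\<Sum>j\<in>J. X j)" by simp_all
  then show ?case using insert phi_subst_add[OF x J] supp_ge_add[OF x J] by simp
qed

lemma phi_coeff_convolution:
  "(\<Sum>t1. phi_coeff k i (t1 - l) * phi_coeff k' i' (t - t1 - l')) =
   (phipow p k $ i * phipow p k' $ i') $$ (t - l - l')"
proof -
  have "(\<Sum>t1. phi_coeff k i (t1 - l) * phi_coeff k' i' (t - t1 - l')) =
        (\<Sum>s. phi_coeff k i s * phi_coeff k' i' (t - l - l' - s))"
  proof (rule Sum_any.reindex_cong[of "\<lambda>s. s + l"])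
    show "bij (\<lambda>s::int. s + l)" by (rule o_bij[of "\<lambda>s. s - l"]) (auto simp: fun_eq_iff)
  qed (auto simp: fun_eq_iff algebra_simps)
  then show ?thesis by (simp only: fls_times_nth_Sum_any)
qed

lemma bij_shear_pairs: "bij (\<lambda>((k::int, l::int), (k', l')). ((k + k', l + l'), (l, k)))"
  by (rule o_bij[of "\<lambda>((K, L), (l, k)). ((k, l), (K - k, L - l))"]) (auto simp: fun_eq_iff)

lemma phi_subst_mult_nth_expand:
  assumes X: "supp_ge N X" and Y: "supp_ge M Y"
  shows "phi_subst (X * Y) $ j $$ t =
    (\<Sum>((k, l), (k', l')). X $$ l $$ k * Y $$ l' $$ k' * phi_coeff (k + k') j (t - l - l'))"
proof -
  define R where "R = t - int j * ord_step - N - M"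
  have "phi_subst (X * Y) $ j $$ t =
        (\<Sum>(K, L). (\<Sum>(l, k). X $$ l $$ k * Y $$ (L - l) $$ (K - k)) * phi_coeff K j (t - L))"
    by (simp only: phi_subst_nth[OF supp_ge_mult[OF X Y]] fls_fls_times_nth)
  also have "\<dots> = (\<Sum>(K, L). \<Sum>(l, k). X $$ l $$ k * Y $$ (L - l) $$ (K - k) * phi_coeff K j (t - L))"
    by (simp add: case_prod_unfold Sum_any_mult_right)
  also have "\<dots> = (\<Sum>((K, L), (l, k)). X $$ l $$ k * Y $$ (L - l) $$ (K - k) * phi_coeff K j (t - L))"
  proof (rule Sum_any_cartesian_pairs[of "{N + M..R} \<times> {N + M..R}" "{N..R - M} \<times> {N..R - M}"])
    fix K L l k
    assume "X $$ l $$ k * Y $$ (L - l) $$ (K - k) * phi_coeff K j (t - L) \<noteq> 0"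
    then have "X $$ l $$ k \<noteq> 0" "Y $$ (L - l) $$ (K - k) \<noteq> 0" "phi_coeff K j (t - L) \<noteq> 0"
      by auto
    then have "N \<le> l" "N \<le> k" "M \<le> L - l" "M \<le> K - k" "K + int j * ord_step \<le> t - L"
      using supp_geD[OF X] supp_geD[OF Y] phi_coeff_nonzero by blast+
    then show "(K, L) \<in> {N + M..R} \<times> {N + M..R} \<and> (l, k) \<in> {N..R - M} \<times> {N..R - M}"
      unfolding R_def by auto
  qed auto
  also have "\<dots> = (\<Sum>((k, l), (k', l')). X $$ l $$ k * Y $$ l' $$ k' * phi_coeff (k + k') j (t - l - l'))"
    by (rule Sum_any.reindex_cong[OF bij_shear_pairs]) (auto simp: fun_eq_iff algebra_simps)
  finally show ?thesis .
qed

lemma phi_subst_coeff_mult_expand: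
  assumes X: "supp_ge N X" and Y: "supp_ge M Y"
  shows "(phi_subst X $ i * phi_subst Y $ i') $$ t =
    (\<Sum>((k, l), (k', l')).
       X $$ l $$ k * Y $$ l' $$ k' * (phipow p k $ i * phipow p k' $ i') $$ (t - l - l'))"
proof -
  define a where "a = int i * ord_step"
  define b where "b = int i' * ord_step"
  define g where "g t1 k l k' l' =
    X $$ l $$ k * phi_coeff k i (t1 - l) * (Y $$ l' $$ k' * phi_coeff k' i' (t - t1 - l'))"
    for t1 k l k' l'
  have g_nonzero: "N \<le> k \<and> N \<le> l \<and> M \<le> k' \<and> M \<le> l' \<and> k + a \<le> t1 - l \<and> k' + b \<le> t - t1 - l'"
    if "g t1 k l k' l' \<noteq> 0" for t1 k l k' l'
    using that phi_subst_term_nonzero[OF X, of l k i t1]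
      phi_subst_term_nonzero[OF Y, of l' k' i' "t - t1"]
      phi_coeff_nonzero[of k i "t1 - l"] phi_coeff_nonzero[of k' i' "t - t1 - l'"]
    unfolding g_def a_def b_def by auto
  have "(phi_subst X $ i * phi_subst Y $ i') $$ t =
    (\<Sum>t1. (\<Sum>(k, l). X $$ l $$ k * phi_coeff k i (t1 - l)) *
            (\<Sum>(k', l'). Y $$ l' $$ k' * phi_coeff k' i' (t - t1 - l')))"
    by (simp only: fls_times_nth_Sum_any phi_subst_nth[OF X] phi_subst_nth[OF Y])
  also have "\<dots> = (\<Sum>t1. \<Sum>(k, l). \<Sum>(k', l'). g t1 k l k' l')"
    using finite_phi_subst_support[OF X] finite_phi_subst_support[OF Y]
    by (simp add: Sum_any_product case_prod_unfold g_def)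
  also have "\<dots> = (\<Sum>t1. \<Sum>((k, l), (k', l')). g t1 k l k' l')"
  proof (rule Sum_any.cong, rule Sum_any_cartesian_pairs)
    fix t1 k l k' l' assume "g t1 k l k' l' \<noteq> 0"
    then show "(k, l) \<in> {N..t1 - a - N} \<times> {N..t1 - a - N} \<and>
               (k', l') \<in> {M..t - t1 - b - M} \<times> {M..t - t1 - b - M}"
      using g_nonzero[of t1 k l k' l'] by auto
  qed auto
  also have "\<dots> = (\<Sum>((k, l), (k', l')). \<Sum>t1. g t1 k l k' l')"
  proof (rule Sum_any_swap_pairs)
    let ?K = "{N..t - 2 * M - a - b - N}" and ?K' = "{M..t - 2 * N - a - b - M}"
    fix t1 k l k' l' assume "g t1 k l k' l' \<noteq> 0"
    then show "t1 \<in> {2 * N + a..t - 2 * M - b} \<and> ((k, l), (k', l')) \<in> (?K \<times> ?K) \<times> (?K' \<times> ?K')"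
      using g_nonzero[of t1 k l k' l'] by auto
  qed auto
  also have "\<dots> = (\<Sum>((k, l), (k', l')).
      X $$ l $$ k * Y $$ l' $$ k' * (phipow p k $ i * phipow p k' $ i') $$ (t - l - l'))"
    unfolding g_def
    by (simp add: mult_ac Sum_any_mult_left phi_coeff_convolution[symmetric])
  finally show ?thesis .
qed

lemma finite_phi_subst_product_support:
  assumes X: "supp_ge N X" and Y: "supp_ge M Y"
  shows "finite {x. (\<lambda>((k, l), (k', l')).
    X $$ l $$ k * Y $$ l' $$ k' * (phipow p k $ i * phipow p k' $ i') $$ (t - l - l')) x \<noteq> 0}"
proof -
  define R where "R = t - int i * ord_step - int i' * ord_step"
  let ?K = "{N..R - 2 * M - N}" and ?K' = "{M..R - 2 * N - M}"
  show ?thesis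
  proof (rule finite_support_subset[of "(?K \<times> ?K) \<times> (?K' \<times> ?K')"])
    fix x
    assume nz: "(\<lambda>((k, l), (k', l')).
      X $$ l $$ k * Y $$ l' $$ k' * (phipow p k $ i * phipow p k' $ i') $$ (t - l - l')) x \<noteq> 0"
    obtain k l k' l' where x: "x = ((k, l), (k', l'))" by (metis prod.collapse)
    from nz have "X $$ l $$ k \<noteq> 0" "Y $$ l' $$ k' \<noteq> 0"
      and prod: "(phipow p k $ i * phipow p k' $ i') $$ (t - l - l') \<noteq> 0"
      by (auto simp: x)
    moreover have "k + int i * ord_step + (k' + int i' * ord_step) \<le> t - l - l'"
      using prod phipow_nth_below
      by (meson fls_times_nth_below not_le)
    ultimately show "x \<in> (?K \<times> ?K) \<times> (?K' \<times> ?K')"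
      using supp_geD[OF X] supp_geD[OF Y] unfolding x R_def by fastforce
  qed simp
qed

lemma phi_subst_mult:
  assumes X: "supp_ge N X" and Y: "supp_ge M Y"
  shows "phi_subst (X * Y) = phi_subst X * phi_subst Y"
proof (rule fps_ext, rule fls_eqI)
  fix j t
  let ?term = "\<lambda>i ((k, l), (k', l')).
    X $$ l $$ k * Y $$ l' $$ k' * (phipow p k $ i * phipow p k' $ (j - i)) $$ (t - l - l')"
  have "(phi_subst X * phi_subst Y) $ j $$ t = (\<Sum>i=0..j. Sum_any (?term i))"
    by (simp add: fps_mult_nth fls_nth_sum phi_subst_coeff_mult_expand[OF X Y])
  also have "\<dots> = (\<Sum>x. \<Sum>i=0..j. ?term i x)"
    by (rule sum_Sum_any_swap) (simp_all add: finite_phi_subst_product_support[OF X Y])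
  also have "\<dots> = (\<Sum>((k, l), (k', l')). X $$ l $$ k * Y $$ l' $$ k' * phi_coeff (k + k') j (t - l - l'))"
    by (simp add: case_prod_unfold sum_distrib_left[symmetric] fps_mult_nth[symmetric]
        fls_nth_sum[symmetric] phipow_add)
  also have "\<dots> = phi_subst (X * Y) $ j $$ t"
    by (rule phi_subst_mult_nth_expand[OF X Y, symmetric])
  finally show "phi_subst (X * Y) $ j $$ t = (phi_subst X * phi_subst Y) $ j $$ t" by simp
qed

definition fls2_of :: "(int \<Rightarrow> int \<Rightarrow> complex) \<Rightarrow> complex fls fls" where
  "fls2_of F = Abs_fls (\<lambda>l. Abs_fls (\<lambda>k. F k l))"

lemma laurent2_bound: "laurent2 (F :: int \<Rightarrow> int \<Rightarrow> complex) \<Longrightarrow> \<exists>N. \<forall>k l. k < N \<or> l < N \<longrightarrow> F k l = 0"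
  by (auto simp: laurent2_def)

lemma fls2_of_nth:
  assumes "laurent2 F"
  shows "fls2_of F $$ l $$ k = F k l"
proof -
  obtain N where N: "\<forall>k l. k < N \<or> l < N \<longrightarrow> F k l = 0"
    using laurent2_bound[OF assms] by blast
  have inner: "Abs_fls (\<lambda>k. F k l) $$ k = F k l" for l k
    using N by (simp add: nth_Abs_fls_lower_bound[of N])
  have "Abs_fls (\<lambda>k. F k l) = 0" if "l < N" for l
    using N that by (auto simp: fls_eq_iff inner)
  then have "fls2_of F $$ l = Abs_fls (\<lambda>k. F k l)"
    unfolding fls2_of_def by (simp add: nth_Abs_fls_lower_bound[of N])
  then show ?thesis by (simp add: inner)
qed

lemma supp_ge_fls2_of:
  assumes "\<forall>k l. k < N \<or> l < N \<longrightarrow> F k l = 0"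
  shows "supp_ge N (fls2_of F)"
proof -
  have "laurent2 F" using assms by (auto simp: laurent2_def)
  then show ?thesis using assms by (auto simp: supp_ge_def fls2_of_nth)
qed

lemma laurent2_supp_ge: "laurent2 F \<Longrightarrow> \<exists>N. supp_ge N (fls2_of F)"
  using laurent2_bound supp_ge_fls2_of by blast

lemma least_total_degree:
  fixes F :: "int \<Rightarrow> int \<Rightarrow> complex"
  assumes N: "\<forall>k l. k < N \<or> l < N \<longrightarrow> F k l = 0" and nonzero: "F \<noteq> (\<lambda>k l. 0)"
  obtains k0 s0 where "F k0 (s0 - k0) \<noteq> 0" "\<And>k l. F k l \<noteq> 0 \<Longrightarrow> s0 \<le> k + l"
proof -
  define S where "S = {n::nat. \<exists>k l. F k l \<noteq> 0 \<and> k + l = 2 * N + int n}"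
  have bound: "2 * N \<le> k + l" if "F k l \<noteq> 0" for k l
  proof -
    have "\<not> k < N" "\<not> l < N" using N that by blast+
    then show ?thesis by linarith
  qed
  have deg: "nat (k + l - 2 * N) \<in> S" if "F k l \<noteq> 0" for k l
    using that bound[OF that] unfolding S_def by (intro CollectI exI[of _ k] exI[of _ l]) auto
  obtain k1 l1 where "F k1 l1 \<noteq> 0" using nonzero by blast
  then have "nat (k1 + l1 - 2 * N) \<in> S" by (rule deg)
  then have "(LEAST n. n \<in> S) \<in> S" by (rule LeastI)
  then obtain k0 l0 where k0: "F k0 l0 \<noteq> 0" and s0: "k0 + l0 = 2 * N + int (LEAST n. n \<in> S)"
    unfolding S_def by blast
  have "2 * N + int (LEAST n. n \<in> S) \<le> k + l" if "F k l \<noteq> 0" for k l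
  proof -
    have "(LEAST n. n \<in> S) \<le> nat (k + l - 2 * N)" using deg[OF that] by (rule Least_le)
    then show ?thesis using bound[OF that] by linarith
  qed
  moreover have "F k0 (2 * N + int (LEAST n. n \<in> S) - k0) \<noteq> 0"
    using k0 s0[symmetric] by simp
  ultimately show ?thesis by (rule that[rotated])
qed

lemma phi_subst_least_degree_term:
  assumes F: "laurent2 F" and s0: "\<And>k l. F k l \<noteq> 0 \<Longrightarrow> s0 \<le> k + l"
  shows "fls2_of F $$ l $$ k * phi_coeff k j (s0 + int j * ord_step - l) =
         (if l = s0 - k then F k (s0 - k) * int_pow psi k $ j else 0)"
proof (cases "l = s0 - k")
  case True
  then have "s0 + int j * ord_step - l = k + int j * ord_step" by simp
  then show ?thesis using True by (simp only: fls2_of_nth[OF F] phipow_nth_initial) simp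
next
  case False
  show ?thesis
  proof (cases "F k l = 0")
    case False
    with \<open>l \<noteq> s0 - k\<close> have "s0 + int j * ord_step - l < k + int j * ord_step"
      using s0[of k l] by linarith
    then show ?thesis using \<open>l \<noteq> s0 - k\<close> by (simp add: phipow_nth_below)
  qed (use False in \<open>simp add: fls2_of_nth[OF F]\<close>)
qed

text \<open>On the line \<open>k + l = s\<^sub>0\<close> of least total degree the initial part of \<open>f(\<phi>(x,z),x)\<close> is
  \<open>\<Sum>\<^sub>k F k (s\<^sub>0 - k) \<psi>\<^sup>k\<close>, and distinct powers of \<open>\<psi>\<close> are linearly independent.\<close>

lemma phi_subst_fls2_of_initial:
  assumes N: "\<forall>k l. k < N \<or> l < N \<longrightarrow> F k l = 0" and s0: "\<And>k l. F k l \<noteq> 0 \<Longrightarrow> s0 \<le> k + l"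
  shows "phi_subst (fls2_of F) $ j $$ (s0 + int j * ord_step) =
         (\<Sum>k\<in>{N..s0 - N}. fps_const (F k (s0 - k)) * int_pow psi k) $ j"
proof -
  have F: "laurent2 F" using N by (auto simp: laurent2_def)
  have F_nonzero: "k \<in> {N..s0 - N}" if "F k (s0 - k) \<noteq> 0" for k
  proof -
    have "\<not> k < N" "\<not> s0 - k < N" using N that by blast+
    then show ?thesis by simp
  qed
  have "phi_subst (fls2_of F) $ j $$ (s0 + int j * ord_step) =
        (\<Sum>(k, l). if l = s0 - k then F k (s0 - k) * int_pow psi k $ j else 0)"
    by (simp add: phi_subst_nth[OF supp_ge_fls2_of[OF N]] phi_subst_least_degree_term[OF F s0])
  also have "\<dots> = (\<Sum>k. \<Sum>l. if l = s0 - k then F k (s0 - k) * int_pow psi k $ j else 0)"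
  proof (rule Sum_any_cartesian[symmetric, of "{N..s0 - N}" "{N..s0 - N}"])
    fix k l assume "(if l = s0 - k then F k (s0 - k) * int_pow psi k $ j else 0) \<noteq> 0"
    then have "l = s0 - k" "k \<in> {N..s0 - N}" using F_nonzero by (auto split: if_splits)
    then show "k \<in> {N..s0 - N} \<and> l \<in> {N..s0 - N}" by auto
  qed auto
  also have "\<dots> = (\<Sum>k. F k (s0 - k) * int_pow psi k $ j)"
    by (simp add: eq_commute[of _ "s0 - _"])
  also have "\<dots> = (\<Sum>k\<in>{N..s0 - N}. F k (s0 - k) * int_pow psi k $ j)"
    by (rule Sum_any.expand_superset) (auto intro: F_nonzero)
  finally show ?thesis by (simp add: fps_sum_nth)
qed

lemma phi_subst_fls2_of_nonzero:
  assumes "laurent2 F" "F \<noteq> (\<lambda>k l. 0)"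
  shows "phi_subst (fls2_of F) \<noteq> 0"
proof
  assume zero: "phi_subst (fls2_of F) = 0"
  obtain N where N: "\<forall>k l. k < N \<or> l < N \<longrightarrow> F k l = 0"
    using laurent2_bound[OF assms(1)] by blast
  obtain k0 s0 where k0: "F k0 (s0 - k0) \<noteq> 0" and s0: "\<And>k l. F k l \<noteq> 0 \<Longrightarrow> s0 \<le> k + l"
    using least_total_degree[OF N assms(2)] by blast
  have "(\<Sum>k\<in>{N..s0 - N}. fps_const (F k (s0 - k)) * int_pow psi k) = 0"
  proof (rule fps_ext)
    fix j
    show "(\<Sum>k\<in>{N..s0 - N}. fps_const (F k (s0 - k)) * int_pow psi k) $ j = 0 $ j"
      using phi_subst_fls2_of_initial[OF N s0, of j, symmetric] by (simp add: zero)
  qed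
  then have "\<forall>k\<in>{N..s0 - N}. F k (s0 - k) = 0"
    by (rule fps_int_pow_independent[OF psi_0 psi_1 finite_atLeastAtMost])
  moreover have "\<not> k0 < N" "\<not> s0 - k0 < N" using N k0 by blast+
  ultimately show False using k0 by auto
qed

end

definition hshift :: "nat \<Rightarrow> 'v::zero hmod \<Rightarrow> 'v hmod" where
  "hshift K w = (\<lambda>n. if K \<le> n then w (n - K) else 0)"

lemma hshift_hshift: "hshift k (hshift K w) = hshift (k+K) w"
  by (auto simp: hshift_def fun_eq_iff)

lemma hshift_0 [simp]: "hshift 0 w = w"
  by (simp add: hshift_def)

lemma hshift_nth_add [simp]: "hshift K w (i + K) = w i"
  by (simp add: hshift_def)

locale hbar_space = vector_space scale for scale :: "complex \<Rightarrow> 'v::ab_group_add \<Rightarrow> 'v"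
begin

lemma hsmult_hpow: "hsmult scale (hpow K) w = hshift K w"
proof
  fix n
  have "hsmult scale (hpow K) w n = (\<Sum>i\<le>n. scale (hpow K i) (w (n - i)))"
    by (simp add: hsmult_def)
  also have "\<dots> = (\<Sum>i\<le>n. if i = K then w (n - K) else 0)"
    by (rule sum.cong) (auto simp: hpow_def)
  also have "\<dots> = hshift K w n" by (simp add: hshift_def)
  finally show "hsmult scale (hpow K) w n = hshift K w n" .
qed

lemma ssmult_hpow: "ssmult scale (hpow K) a = (\<lambda>m w. hshift K (a m w))"
  by (simp add: ssmult_def hsmult_hpow)

lemma hlinear_add: "hlinear scale A \<Longrightarrow> A (hadd v w) = hadd (A v) (A w)"
  by (simp add: hlinear_def)

lemma hlinear_smult: "hlinear scale A \<Longrightarrow> A (hsmult scale c w) = hsmult scale c (A w)"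
  by (simp add: hlinear_def)

lemma hlinear_hshift: "hlinear scale A \<Longrightarrow> A (hshift K w) = hshift K (A w)"
  using hlinear_smult[of A "hpow K" w] by (simp add: hsmult_hpow)

lemma hlinear_zero: "hlinear scale A \<Longrightarrow> A (\<lambda>_. 0) = (\<lambda>_. 0)"
  using hlinear_add[of A "\<lambda>_. 0" "\<lambda>_. 0"] by (simp add: hadd_def fun_eq_iff)

lemma hlinear_nth_cong:
  assumes a: "hlinear scale A" and agr: "\<forall>j\<le>i. v j = w j"
  shows "A v i = A w i"
proof -
  define d where "d = (\<lambda>n. v (n + Suc i) - w (n + Suc i))"
  have "v = hadd w (hshift (Suc i) d)"
    using agr by (auto simp: fun_eq_iff hadd_def hshift_def d_def)
  then have "A v = hadd (A w) (hshift (Suc i) (A d))"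
    using hlinear_add[OF a] hlinear_hshift[OF a] by simp
  then show ?thesis by (simp add: hadd_def hshift_def)
qed

lemma hlinear_nth_eq_0:
  assumes a: "hlinear scale A" and z: "\<forall>j\<le>i. v j = 0"
  shows "A v i = 0"
  using hlinear_nth_cong[OF a, of i v "\<lambda>_. 0"] z hlinear_zero[OF a] by (simp add: fun_eq_iff)

lemma Eh_hlinear: "a \<in> Eh scale \<Longrightarrow> hlinear scale (a m)"
  by (simp add: Eh_def)

lemma Eh_truncated: "a \<in> Eh scale \<Longrightarrow> \<exists>N. \<forall>m<N. \<forall>i<n. a m w i = 0"
  by (cases "n = 0") (auto simp: Eh_def)

lemma hshift_hsmult: "hshift K (hsmult scale c w) = hsmult scale c (hshift K w)"
proof
  fix n
  show "hshift K (hsmult scale c w) n = hsmult scale c (hshift K w) n"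
  proof (cases "K \<le> n")
    case True
    have "hsmult scale c (hshift K w) n = (\<Sum>i\<le>n. scale (c i) (hshift K w (n - i)))"
      by (simp add: hsmult_def)
    also have "\<dots> = (\<Sum>i\<le>n - K. scale (c i) (w (n - K - i)))"
      using True by (intro sum.mono_neutral_cong_right) (auto simp: hshift_def algebra_simps)
    finally show ?thesis using True by (simp add: hshift_def hsmult_def)
  next
    case False
    then show ?thesis by (auto simp: hshift_def hsmult_def intro!: sum.neutral)
  qed
qed

lemma hshift_inj: "hshift n x = hshift n y \<Longrightarrow> x = y"
  by (metis hshift_nth_add ext)

lemma hsmult_diff: "hsmult scale c (\<lambda>s. x s - y s) = (\<lambda>s. hsmult scale c x s - hsmult scale c y s)"
  by (auto simp: hsmult_def fun_eq_iff scale_right_diff_distrib sum_subtractf)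

lemma hlinear_hshift_comp:
  assumes a: "hlinear scale A"
  shows "hlinear scale (\<lambda>w. hshift K (A w))"
proof -
  have "hshift K (A (hadd v w)) = hadd (hshift K (A v)) (hshift K (A w))" for v w
    using hlinear_add[OF a] by (auto simp: hadd_def hshift_def fun_eq_iff)
  moreover have "hshift K (A (hsmult scale c w)) = hsmult scale c (hshift K (A w))" for c w
    using hlinear_smult[OF a] hshift_hsmult by simp
  ultimately show ?thesis by (simp add: hlinear_def)
qed

lemma Eh_hshift:
  assumes a: "a \<in> Eh scale"
  shows "(\<lambda>m w. hshift K (a m w)) \<in> Eh scale"
proof -
  have "\<exists>N. \<forall>m<N. \<forall>i<n. hshift K (a m w) i = 0" for n w
  proof -
    obtain N where "\<forall>m<N. \<forall>i<n. a m w i = 0" using Eh_truncated[OF a] by blast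
    then show ?thesis by (auto simp: hshift_def intro!: exI[of _ N])
  qed
  then show ?thesis
    using hlinear_hshift_comp[OF Eh_hlinear[OF a]] by (simp add: Eh_def)
qed

end

lemma opprod_Nil[simp]: "opprod [] ms w = w"
  by (simp add: opprod_def)

lemma opprod_Cons[simp]: "opprod (a # as) (m # ms) w = a m (opprod as ms w)"
  by (simp add: opprod_def)

definition qc_coeff :: "(complex \<Rightarrow> 'v::ab_group_add \<Rightarrow> 'v) \<Rightarrow> (int \<Rightarrow> int \<Rightarrow> complex) \<Rightarrow>
    'v hser list \<Rightarrow> int list \<Rightarrow> 'v hmod \<Rightarrow> nat \<Rightarrow> 'v" where
  "qc_coeff sc F as ns w i =
     (\<Sum>ks\<in>{ks. length ks = length as \<and> pairprod (length as) F ks \<noteq> 0 \<and>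
                opprod as (map2 (-) ns ks) w i \<noteq> 0}.
        sc (pairprod (length as) F ks) (opprod as (map2 (-) ns ks) w i))"

lemma qc_at_iff:
  "qc_at sc n as \<longleftrightarrow> (\<exists>F. laurent2 F \<and> F \<noteq> (\<lambda>a b. 0) \<and>
     (\<forall>w. \<exists>N. \<forall>ns. length ns = length as \<longrightarrow> (\<exists>l<length as. ns ! l < N) \<longrightarrow>
        (\<forall>i<n. qc_coeff sc F as ns w i = 0)))"
  by (simp add: qc_at_def qc_coeff_def Let_def)

lemma qc_at_transfer:
  assumes len: "length as' = length as" and f: "\<forall>i<n. f i < n'"
    and eq: "\<And>i ms w. i < n \<Longrightarrow> length ms = length as \<Longrightarrow> opprod as ms w i = opprod as' ms w (f i)"
    and qc: "qc_at sc n' as'"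
  shows "qc_at sc n as"
proof -
  have coeff: "qc_coeff sc F as ns w i = qc_coeff sc F as' ns w (f i)"
    if "i < n" "length ns = length as" for F ns w i
  proof -
    have "opprod as (map2 (-) ns ks) w i = opprod as' (map2 (-) ns ks) w (f i)"
      if "length ks = length as" for ks
      using eq \<open>i < n\<close> that \<open>length ns = length as\<close> by simp
    then show ?thesis
      unfolding qc_coeff_def len by (intro sum.cong) auto
  qed
  from qc obtain F where F: "laurent2 F" "F \<noteq> (\<lambda>a b. 0)"
    and vanish: "\<forall>w. \<exists>N. \<forall>ns. length ns = length as \<longrightarrow> (\<exists>l<length as. ns ! l < N) \<longrightarrow>
        (\<forall>i<n'. qc_coeff sc F as' ns w i = 0)"
    unfolding qc_at_iff len by blast
  show ?thesis
    unfolding qc_at_iff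
  proof (intro exI[of _ F] conjI F allI)
    fix w
    obtain N where "\<forall>ns. length ns = length as \<longrightarrow> (\<exists>l<length as. ns ! l < N) \<longrightarrow>
        (\<forall>i<n'. qc_coeff sc F as' ns w i = 0)"
      using vanish by blast
    then show "\<exists>N. \<forall>ns. length ns = length as \<longrightarrow> (\<exists>l<length as. ns ! l < N) \<longrightarrow>
        (\<forall>i<n. qc_coeff sc F as ns w i = 0)"
      using coeff f by (intro exI[of _ N]) simp
  qed
qed

context hbar_space
begin

lemma opprod_hshift:
  assumes "\<forall>a\<in>set as. a \<in> Eh scale" "length ms = length as"
  shows "opprod (map (\<lambda>a m w. hshift (kk a) (a m w)) as) ms w =
         hshift (sum_list (map kk as)) (opprod as ms w)"
  using assms
proof (induction as arbitrary: ms)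
  case Nil then show ?case by simp
next
  case (Cons a as)
  then obtain m ms' where ms: "ms = m # ms'" by (cases ms) auto
  have lin: "hlinear scale (a m)" using Cons.prems Eh_hlinear by auto
  have "opprod (map (\<lambda>a m w. hshift (kk a) (a m w)) (a # as)) ms w =
        hshift (kk a) (a m (hshift (sum_list (map kk as)) (opprod as ms' w)))"
    using Cons ms by simp
  also have "\<dots> = hshift (kk a + sum_list (map kk as)) (a m (opprod as ms' w))"
    by (simp add: hlinear_hshift[OF lin] hshift_hshift)
  finally show ?case using ms by simp
qed

lemma opprod_nth_cong:
  assumes "\<forall>a\<in>set as. a \<in> Eh scale" "length ms = length as"
    and "\<forall>a\<in>set as. \<forall>m y. \<forall>i<n. a m y i = uu a m y i"
  shows "\<forall>i<n. opprod as ms w i = opprod (map uu as) ms w i"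
  using assms
proof (induction as arbitrary: ms)
  case Nil then show ?case by simp
next
  case (Cons a as)
  then obtain m ms' where ms: "ms = m # ms'" by (cases ms) auto
  have lin: "hlinear scale (a m)" using Cons.prems Eh_hlinear by auto
  have IH: "\<forall>i<n. opprod as ms' w i = opprod (map uu as) ms' w i"
    using Cons ms by auto
  show ?case
  proof (intro allI impI)
    fix i assume i: "i < n"
    have "a m (opprod as ms' w) i = a m (opprod (map uu as) ms' w) i"
      using IH i by (intro hlinear_nth_cong[OF lin]) auto
    also have "\<dots> = uu a m (opprod (map uu as) ms' w) i"
      using Cons.prems(3) i by auto
    finally show "opprod (a # as) ms w i = opprod (map uu (a # as)) ms w i"
      using ms by simp
  qed
qed

lemma hqc_hsat:
  assumes qc: "hqc scale U"
  shows "hqc scale (hsat scale U)"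
  unfolding hqc_def
proof (intro allI impI)
  fix as n assume as: "set as \<subseteq> hsat scale U" and n: "1 \<le> (n::nat)"
  define kk where "kk a = (SOME k. ssmult scale (hpow k) a \<in> U)" for a
  have Eh: "\<forall>a\<in>set as. a \<in> Eh scale" using as by (auto simp: hsat_def)
  have kU: "ssmult scale (hpow (kk a)) a \<in> U" if "a \<in> set as" for a
    using as that unfolding kk_def hsat_def by (auto intro: someI_ex)
  define as' where "as' = map (\<lambda>a m w. hshift (kk a) (a m w)) as"
  define K where "K = sum_list (map kk as)"
  have "set as' \<subseteq> U" using kU by (auto simp: as'_def ssmult_hpow)
  then have "qc_at scale (n + K) as'" using qc n by (auto simp: hqc_def)
  then show "qc_at scale n as"
  proof (rule qc_at_transfer[where f = "\<lambda>i. i + K", rotated 3])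
    show "length as' = length as" by (simp add: as'_def)
    show "\<forall>i<n. i + K < n + K" by simp
    show "\<And>i ms w. i < n \<Longrightarrow> length ms = length as \<Longrightarrow> opprod as ms w i = opprod as' ms w (i + K)"
      using opprod_hshift[OF Eh] by (simp add: as'_def K_def)
  qed
qed

lemma hclosure_approx:
  assumes "a \<in> hclosure scale U"
  shows "\<exists>u\<in>U. \<forall>m w i. i < n \<longrightarrow> a m w i = u m w i"
proof -
  obtain u e where "u \<in> U" "a = sadd u (ssmult scale (hpow n) e)"
    using assms unfolding hclosure_def by blast
  then show ?thesis
    by (auto simp: sadd_def ssmult_hpow hadd_def hshift_def)
qed

lemma hqc_hclosure:
  assumes qc: "hqc scale U"
  shows "hqc scale (hclosure scale U)"
  unfolding hqc_def
proof (intro allI impI)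
  fix as n assume as: "set as \<subseteq> hclosure scale U" and n: "1 \<le> (n::nat)"
  define uu where "uu a = (SOME u. u \<in> U \<and> (\<forall>m w i. i < n \<longrightarrow> a m w i = u m w i))" for a
  have Eh: "\<forall>a\<in>set as. a \<in> Eh scale" using as by (auto simp: hclosure_def)
  have uu: "uu a \<in> U \<and> (\<forall>m w i. i < n \<longrightarrow> a m w i = uu a m w i)" if "a \<in> set as" for a
  proof -
    have "a \<in> hclosure scale U" using as that by auto
    from hclosure_approx[OF this, of n]
    have "\<exists>u. u \<in> U \<and> (\<forall>m w i. i < n \<longrightarrow> a m w i = u m w i)" by blast
    then show ?thesis unfolding uu_def by (rule someI_ex)
  qed
  then have agree: "\<forall>a\<in>set as. \<forall>m y. \<forall>i<n. a m y i = uu a m y i" by blast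
  have "set (map uu as) \<subseteq> U" using uu by auto
  then have "qc_at scale n (map uu as)" using qc n by (auto simp: hqc_def)
  then show "qc_at scale n as"
  proof (rule qc_at_transfer[where f = "\<lambda>i. i", rotated 3])
    show "length (map uu as) = length as" by simp
    show "\<forall>i<n. i < n" by simp
    show "\<And>i ms w. i < n \<Longrightarrow> length ms = length as \<Longrightarrow> opprod as ms w i = opprod (map uu as) ms w i"
      using opprod_nth_cong[OF Eh _ agree] by auto
  qed
qed

end

section \<open>Linear functionals turn \<open>Y\<close> into Laurent series\<close>

lemma module_complex_mult: "module ((*) :: complex \<Rightarrow> complex \<Rightarrow> complex)"
  by unfold_locales (simp_all add: algebra_simps)

locale Y_setting = hbar_space scale + phi_flow p
  for scale :: "complex \<Rightarrow> 'v::ab_group_add \<Rightarrow> 'v" and p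
begin

lemma functional_separates:
  assumes "x \<noteq> 0"
  shows "\<exists>L. module_hom scale (*) L \<and> L x \<noteq> 0"
proof -
  have ind: "independent {x}" using assms by (simp add: independent_insert)
  define B where "B = extend_basis {x}"
  have B: "independent B" "span B = UNIV" "x \<in> B"
    using independent_extend_basis[OF ind] span_extend_basis[OF ind] extend_basis_superset[OF ind]
    unfolding B_def by auto
  have "module_hom scale (*) (\<lambda>v. representation B v x)"
    using representation_add[OF B(1)] representation_scale[OF B(1)] B(2)
    by (auto simp: module_hom_iff module_axioms module_complex_mult)
  moreover have "representation B x x = 1"
    using representation_basis[OF B(1,3)] by simp
  ultimately show ?thesis by force
qed

lemma eq_by_functionals:
  assumes "\<And>L. module_hom scale (*) L \<Longrightarrow> L x = L y"
  shows "x = y"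
proof (rule ccontr)
  assume "x \<noteq> y"
  then obtain L where L: "module_hom scale (*) L" and "L (x - y) \<noteq> 0"
    using functional_separates[of "x - y"] by auto
  then show False using assms[OF L] module_hom.diff[OF L] by simp
qed

lemma functional_Sum_any:
  assumes L: "module_hom scale (*) L" and fin: "finite {x. scale (c x) (v x) \<noteq> 0}"
  shows "L (\<Sum>x. scale (c x) (v x)) = (\<Sum>x. c x * L (v x))"
proof -
  have "L (\<Sum>x. scale (c x) (v x)) = (\<Sum>x\<in>{x. scale (c x) (v x) \<noteq> 0}. c x * L (v x))"
    by (simp add: Sum_any.expand_set module_hom.sum[OF L] module_hom.scale[OF L])
  also have "\<dots> = (\<Sum>x. c x * L (v x))"
    by (rule Sum_any.expand_superset[symmetric]) (use fin module_hom.zero[OF L] in auto)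
  finally show ?thesis .
qed

lemma fab_Sum_any: "fab scale F a b k l w i = (\<Sum>(c, d). scale (F c d) (a (k - c) (b (l - d) w) i))"
  unfolding fab_def Sum_any.expand_set by (rule sum.cong) (auto simp: case_prod_unfold)

lemma finite_fab_support:
  assumes a: "a \<in> Eh scale" and b: "b \<in> Eh scale" and F: "laurent2 F"
  shows "finite {x. (\<lambda>(c, d). scale (F c d) (a (k - c) (b (l - d) w) i)) x \<noteq> 0}"
proof -
  obtain NF where NF: "\<forall>c d. c < NF \<or> d < NF \<longrightarrow> F c d = 0"
    using laurent2_bound[OF F] by blast
  obtain Nb where Nb: "\<forall>m<Nb. \<forall>i'<Suc i. b m w i' = 0"
    using Eh_truncated[OF b] by blast
  define Na where "Na d = (SOME N. \<forall>m<N. \<forall>i'<Suc i. a m (b (l - d) w) i' = 0)" for d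
  have Na: "\<forall>m<Na d. \<forall>i'<Suc i. a m (b (l - d) w) i' = 0" for d
    unfolding Na_def by (rule someI_ex) (rule Eh_truncated[OF a])
  show ?thesis
  proof (rule finite_support_subset[of "\<Union>d\<in>{NF..l - Nb}. {NF..k - Na d} \<times> {d}"])
    fix x assume nz: "(\<lambda>(c, d). scale (F c d) (a (k - c) (b (l - d) w) i)) x \<noteq> 0"
    obtain c d where x: "x = (c, d)" by (cases x)
    from nz have F0: "F c d \<noteq> 0" and a0: "a (k - c) (b (l - d) w) i \<noteq> 0" by (auto simp: x)
    have "\<not> c < NF" "\<not> d < NF" using NF F0 by blast+
    moreover have "\<not> l - d < Nb"
    proof
      assume "l - d < Nb"
      then have "a (k - c) (b (l - d) w) i = 0"
        using Nb by (intro hlinear_nth_eq_0[OF Eh_hlinear[OF a]]) auto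
      then show False using a0 by simp
    qed
    moreover have "\<not> k - c < Na d" using Na[of d] a0 by auto
    ultimately show "x \<in> (\<Union>d\<in>{NF..l - Nb}. {NF..k - Na d} \<times> {d})" unfolding x by auto
  qed simp
qed

text \<open>\<open>pair_series L a b w i\<close> is \<open>\<Lambda>(x\<^sub>1,x) = L(a(x\<^sub>1) b(x) w)\<close> at the \<open>\<hbar>\<close>-component \<open>i\<close>.\<close>

definition pair_series :: "('v \<Rightarrow> complex) \<Rightarrow> 'v hser \<Rightarrow> 'v hser \<Rightarrow> 'v hmod \<Rightarrow> nat \<Rightarrow> complex fls fls" where
  "pair_series L a b w i = Abs_fls (\<lambda>l. Abs_fls (\<lambda>k. L (a k (b l w) i)))"

lemma pair_series_nth:
  assumes a: "a \<in> Eh scale" and b: "b \<in> Eh scale" and L: "module_hom scale (*) L"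
  shows "pair_series L a b w i $$ l $$ k = L (a k (b l w) i)"
proof -
  have inner: "Abs_fls (\<lambda>k. L (a k (b l w) i)) $$ k = L (a k (b l w) i)" for l k
  proof -
    obtain N where "\<forall>m<N. \<forall>i'<Suc i. a m (b l w) i' = 0" using Eh_truncated[OF a] by blast
    then show ?thesis by (simp add: nth_Abs_fls_lower_bound[of N] module_hom.zero[OF L])
  qed
  obtain Nb where Nb: "\<forall>m<Nb. \<forall>i'<Suc i. b m w i' = 0" using Eh_truncated[OF b] by blast
  have "Abs_fls (\<lambda>k. L (a k (b l w) i)) = 0" if "l < Nb" for l
  proof -
    have "a k (b l w) i = 0" for k
      using Nb that by (intro hlinear_nth_eq_0[OF Eh_hlinear[OF a]]) auto
    then show ?thesis by (simp add: fls_eq_iff inner module_hom.zero[OF L])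
  qed
  then have "pair_series L a b w i $$ l = Abs_fls (\<lambda>k. L (a k (b l w) i))"
    unfolding pair_series_def by (simp add: nth_Abs_fls_lower_bound[of Nb])
  then show ?thesis by (simp add: inner)
qed

lemma functional_fab:
  assumes a: "a \<in> Eh scale" and b: "b \<in> Eh scale" and F: "laurent2 F" and L: "module_hom scale (*) L"
  shows "L (fab scale F a b k l w i) = (fls2_of F * pair_series L a b w i) $$ l $$ k"
proof -
  have "L (fab scale F a b k l w i) = (\<Sum>(c, d). F c d * L (a (k - c) (b (l - d) w) i))"
    using functional_Sum_any[OF L, where c = "\<lambda>(c, d). F c d"
                                     and v = "\<lambda>(c, d). a (k - c) (b (l - d) w) i"]
      finite_fab_support[OF a b F, of k l w i]
    by (simp add: fab_Sum_any case_prod_unfold)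
  also have "\<dots> = (\<Sum>(d, c). fls2_of F $$ d $$ c * pair_series L a b w i $$ (l - d) $$ (k - c))"
  proof (rule Sum_any.reindex_cong[of "\<lambda>(d, c). (c, d)"])
    show "bij (\<lambda>(d::int, c::int). (c, d))" by (rule o_bij[of "\<lambda>(c, d). (d, c)"]) auto
  qed (auto simp: fun_eq_iff fls2_of_nth[OF F] pair_series_nth[OF a b L])
  also have "\<dots> = (fls2_of F * pair_series L a b w i) $$ l $$ k"
    by (rule fls_fls_times_nth[symmetric])
  finally show ?thesis .
qed

abbreviation fab_vanishes_below ::
    "int \<Rightarrow> (int \<Rightarrow> int \<Rightarrow> complex) \<Rightarrow> 'v hser \<Rightarrow> 'v hser \<Rightarrow> 'v hmod \<Rightarrow> nat \<Rightarrow> bool" where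
  "fab_vanishes_below N F a b w i \<equiv> (\<forall>k l. k < N \<or> l < N \<longrightarrow> fab scale F a b k l w i = 0)"

lemma pair_ok_laurent2: "pair_ok scale n a b F \<Longrightarrow> laurent2 F"
  by (simp add: pair_ok_def)

lemma pair_ok_nonzero: "pair_ok scale n a b F \<Longrightarrow> F \<noteq> (\<lambda>c d. 0)"
  by (simp add: pair_ok_def)

lemma pair_ok_vanishes_below: "pair_ok scale n a b F \<Longrightarrow> \<exists>N. \<forall>i<n. fab_vanishes_below N F a b w i"
  unfolding pair_ok_def by blast

lemma pair_ok_mono: "pair_ok scale n a b F \<Longrightarrow> n' \<le> n \<Longrightarrow> pair_ok scale n' a b F"
  unfolding pair_ok_def by (meson order_less_le_trans)

lemma supp_ge_fab_series:
  assumes a: "a \<in> Eh scale" and b: "b \<in> Eh scale" and F: "laurent2 F" and L: "module_hom scale (*) L"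
    and N: "fab_vanishes_below N F a b w i"
  shows "supp_ge N (fls2_of F * pair_series L a b w i)"
  using N by (auto simp: supp_ge_def functional_fab[OF a b F L, symmetric] module_hom.zero[OF L])

lemma subst_phi_Sum_any:
  "subst_phi scale p F a b j t w i = (\<Sum>(k, l). scale (phi_coeff k j (t - l)) (fab scale F a b k l w i))"
  unfolding subst_phi_def Sum_any.expand_set by (rule sum.cong) (auto simp: case_prod_unfold)

lemma subst_phi_term_nonzero:
  assumes N: "fab_vanishes_below N F a b w i"
    and "scale (phi_coeff k j (t - l)) (fab scale F a b k l w i) \<noteq> 0"
  shows "N \<le> k \<and> N \<le> l \<and> k + l \<le> t - int j * ord_step"
proof -
  from assms(2) have c: "phi_coeff k j (t - l) \<noteq> 0" and f: "fab scale F a b k l w i \<noteq> 0" by auto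
  have "\<not> k < N" "\<not> l < N" using N f by blast+
  then show ?thesis using phi_coeff_nonzero[OF c] by linarith
qed

lemma finite_subst_phi_support:
  assumes "fab_vanishes_below N F a b w i"
  shows "finite {x. (\<lambda>(k, l). scale (phi_coeff k j (t - l)) (fab scale F a b k l w i)) x \<noteq> 0}"
  by (rule finite_support_subset[of "{N..t - int j * ord_step - N} \<times> {N..t - int j * ord_step - N}"])
     (use subst_phi_term_nonzero[OF assms] in fastforce)+

lemma subst_phi_below:
  assumes "fab_vanishes_below N F a b w i" "t < 2 * N + int j * ord_step"
  shows "subst_phi scale p F a b j t w i = 0"
proof -
  have "(\<lambda>(k, l). scale (phi_coeff k j (t - l)) (fab scale F a b k l w i)) = (\<lambda>_. 0)"
    using subst_phi_term_nonzero[OF assms(1)] assms(2) by fastforce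
  then show ?thesis by (simp add: subst_phi_Sum_any)
qed

lemma functional_subst_phi:
  assumes a: "a \<in> Eh scale" and b: "b \<in> Eh scale" and F: "laurent2 F" and L: "module_hom scale (*) L"
    and N: "fab_vanishes_below N F a b w i"
  shows "L (subst_phi scale p F a b j t w i) = phi_subst (fls2_of F * pair_series L a b w i) $ j $$ t"
proof -
  have "L (subst_phi scale p F a b j t w i) =
        (\<Sum>(k, l). phi_coeff k j (t - l) * L (fab scale F a b k l w i))"
    using functional_Sum_any[OF L, where c = "\<lambda>(k, l). phi_coeff k j (t - l)"
        and v = "\<lambda>(k, l). fab scale F a b k l w i"] finite_subst_phi_support[OF N, of j t]
    by (simp add: subst_phi_Sum_any case_prod_unfold)
  also have "\<dots> = phi_subst (fls2_of F * pair_series L a b w i) $ j $$ t"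
    by (simp add: phi_subst_nth[OF supp_ge_fab_series[OF a b F L N]] functional_fab[OF a b F L]
        mult.commute)
  finally show ?thesis .
qed

lemma f_phi_eq_phi_subst: "laurent2 F \<Longrightarrow> f_phi p F = phi_subst (fls2_of F)"
  unfolding f_phi_def phi_subst_def Sum_any.expand_set
  by (auto intro!: arg_cong[where f = Abs_fps] arg_cong[where f = Abs_fls] sum.cong
      simp: fun_eq_iff case_prod_unfold fls2_of_nth)

text \<open>The guard encodes that \<open>\<iota>\<^sub>x\<^sub>,\<^sub>z(1/f(\<phi>,x))\<close> is multiplied by a
  power series in \<open>z\<close>.\<close>

definition Y_summand :: "(int \<Rightarrow> int \<Rightarrow> complex) \<Rightarrow> 'v hser \<Rightarrow> 'v hser \<Rightarrow> int \<Rightarrow> int \<Rightarrow> 'v hmod \<Rightarrow> nat \<Rightarrow>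
    int \<times> int \<Rightarrow> 'v" where
  "Y_summand F a b m t w i = (\<lambda>(j1, t1).
      scale (if - m - 1 - j1 \<ge> 0 then inv_f_phi p F $$ j1 $$ t1 else 0)
      (subst_phi scale p F a b (nat (- m - 1 - j1)) (t - t1) w i))"

lemma Ycoef_Sum_any: "Ycoef scale p F a b m t w i = Sum_any (Y_summand F a b m t w i)"
  unfolding Ycoef_def Sum_any.expand_set Y_summand_def by (rule sum.cong) (auto simp: case_prod_unfold)

lemma Y_summand_nonzero:
  assumes N: "fab_vanishes_below N F a b w i" and nz: "Y_summand F a b m t w i (j1, t1) \<noteq> 0"
  shows "j1 \<in> {fls_subdegree (inv_f_phi p F)..- m - 1} \<and>
    t1 \<in> {fls_subdegree (inv_f_phi p F $$ j1)..t - 2 * N - int (nat (- m - 1 - j1)) * ord_step}"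
proof -
  from nz have j1: "- m - 1 - j1 \<ge> 0" and inv: "inv_f_phi p F $$ j1 $$ t1 \<noteq> 0"
    and sp: "subst_phi scale p F a b (nat (- m - 1 - j1)) (t - t1) w i \<noteq> 0"
    by (auto simp: Y_summand_def split: if_splits)
  have "inv_f_phi p F $$ j1 \<noteq> 0" using inv by auto
  then show ?thesis
    using j1 fls_subdegree_leI[OF inv] fls_subdegree_leI[of "inv_f_phi p F" j1]
      subst_phi_below[OF N, of "t - t1"] sp by force
qed

lemma finite_Y_summand_support:
  assumes "fab_vanishes_below N F a b w i"
  shows "finite {x. Y_summand F a b m t w i x \<noteq> 0}"
proof (rule finite_support_subset[of "SIGMA j1:{fls_subdegree (inv_f_phi p F)..- m - 1}.
      {fls_subdegree (inv_f_phi p F $$ j1)..t - 2 * N - int (nat (- m - 1 - j1)) * ord_step}"])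
  fix x assume "Y_summand F a b m t w i x \<noteq> 0"
  then show "x \<in> (SIGMA j1:{fls_subdegree (inv_f_phi p F)..- m - 1}.
      {fls_subdegree (inv_f_phi p F $$ j1)..t - 2 * N - int (nat (- m - 1 - j1)) * ord_step})"
    using Y_summand_nonzero[OF assms, of m t "fst x" "snd x"] by (cases x) auto
qed auto

lemma Ycoef_below: "\<exists>T. \<forall>t i w. t < T \<longrightarrow> fab_vanishes_below N F a b w i \<longrightarrow> Ycoef scale p F a b m t w i = 0"
proof -
  define J where "J = {fls_subdegree (inv_f_phi p F)..- m - 1}"
  define T where "T = Min (insert 0 ((\<lambda>j1. fls_subdegree (inv_f_phi p F $$ j1) + 2 * N +
    int (nat (- m - 1 - j1)) * ord_step) ` J))"
  have T: "T \<le> fls_subdegree (inv_f_phi p F $$ j1) + 2 * N + int (nat (- m - 1 - j1)) * ord_step"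
    if "j1 \<in> J" for j1
    unfolding T_def by (rule Min_le) (use that in \<open>auto simp: J_def\<close>)
  show ?thesis
  proof (intro exI[of _ T] allI impI)
    fix t i w assume t: "t < T" and N: "fab_vanishes_below N F a b w i"
    have "Y_summand F a b m t w i x = 0" for x
      using Y_summand_nonzero[OF N, of m t "fst x" "snd x"] T t unfolding J_def by fastforce
    then show "Ycoef scale p F a b m t w i = 0" by (simp add: Ycoef_Sum_any)
  qed
qed

lemma functional_Ycoef:
  assumes a: "a \<in> Eh scale" and b: "b \<in> Eh scale" and F: "laurent2 F" and L: "module_hom scale (*) L"
    and N: "fab_vanishes_below N F a b w i"
  shows "L (Ycoef scale p F a b m t w i) =
    (inverse (fps_to_fls (phi_subst (fls2_of F))) *
      fps_to_fls (phi_subst (fls2_of F * pair_series L a b w i))) $$ (- m - 1) $$ t"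
proof -
  define A where "A = fps_to_fls (phi_subst (fls2_of F * pair_series L a b w i))"
  have "L (Ycoef scale p F a b m t w i) =
      (\<Sum>(j1, t1). (if - m - 1 - j1 \<ge> 0 then inv_f_phi p F $$ j1 $$ t1 else 0) *
      L (subst_phi scale p F a b (nat (- m - 1 - j1)) (t - t1) w i))"
    using functional_Sum_any[OF L,
        where c = "\<lambda>(j1, t1). if - m - 1 - j1 \<ge> 0 then inv_f_phi p F $$ j1 $$ t1 else 0"
        and v = "\<lambda>(j1, t1). subst_phi scale p F a b (nat (- m - 1 - j1)) (t - t1) w i"]
      finite_Y_summand_support[OF N, of m t]
    by (simp add: Ycoef_Sum_any Y_summand_def case_prod_unfold)
  also have "\<dots> = (\<Sum>(j1, t1). inv_f_phi p F $$ j1 $$ t1 * A $$ (- m - 1 - j1) $$ (t - t1))"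
    by (rule Sum_any.cong) (simp add: case_prod_unfold functional_subst_phi[OF a b F L N] A_def)
  also have "\<dots> = (inv_f_phi p F * A) $$ (- m - 1) $$ t"
    by (rule fls_fls_times_nth[symmetric])
  finally show ?thesis
    by (simp add: inv_f_phi_def f_phi_eq_phi_subst[OF F] A_def)
qed

lemma Ycoef_indep:
  assumes a: "a \<in> Eh scale" and b: "b \<in> Eh scale"
    and F: "pair_ok scale n a b F" and G: "pair_ok scale n a b G" and i: "i < n"
  shows "Ycoef scale p F a b m t w i = Ycoef scale p G a b m t w i"
proof (rule eq_by_functionals)
  fix L assume L: "module_hom scale (*) L"
  obtain NF where NF: "fab_vanishes_below NF F a b w i"
    using pair_ok_vanishes_below[OF F, of w] i by blast
  obtain NG where NG: "fab_vanishes_below NG G a b w i"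
    using pair_ok_vanishes_below[OF G, of w] i by blast
  obtain MF where MF: "supp_ge MF (fls2_of F)" using laurent2_supp_ge[OF pair_ok_laurent2[OF F]] by blast
  obtain MG where MG: "supp_ge MG (fls2_of G)" using laurent2_supp_ge[OF pair_ok_laurent2[OF G]] by blast
  define D where "D = pair_series L a b w i"
  let ?fF = "fps_to_fls (phi_subst (fls2_of F))" and ?fG = "fps_to_fls (phi_subst (fls2_of G))"
  let ?aF = "fps_to_fls (phi_subst (fls2_of F * D))" and ?aG = "fps_to_fls (phi_subst (fls2_of G * D))"
  txt \<open>Both quotients equal \<open>(f g \<Lambda>)(\<phi>,x) / (f g)(\<phi>,x)\<close>.\<close>
  have "phi_subst (fls2_of G) * phi_subst (fls2_of F * D) =
        phi_subst (fls2_of F) * phi_subst (fls2_of G * D)"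
    using phi_subst_mult[OF MG supp_ge_fab_series[OF a b pair_ok_laurent2[OF F] L NF]]
      phi_subst_mult[OF MF supp_ge_fab_series[OF a b pair_ok_laurent2[OF G] L NG]]
    by (simp add: D_def mult_ac)
  then have "?fG * ?aF = ?fF * ?aG"
    by (metis fls_times_fps_to_fls)
  moreover have "?fF \<noteq> 0" "?fG \<noteq> 0"
    using phi_subst_fls2_of_nonzero pair_ok_laurent2 pair_ok_nonzero F G by simp_all
  ultimately have "inverse ?fF * ?aF = inverse ?fG * ?aG"
    by (simp add: field_simps)
  then show "L (Ycoef scale p F a b m t w i) = L (Ycoef scale p G a b m t w i)"
    by (simp add: functional_Ycoef[OF a b pair_ok_laurent2[OF F] L NF]
        functional_Ycoef[OF a b pair_ok_laurent2[OF G] L NG] D_def)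
qed

end

context Y_setting
begin

lemma pair_series_add:
  assumes a: "a \<in> Eh scale" and b: "b \<in> Eh scale" and L: "module_hom scale (*) L"
  shows "pair_series L a b (hadd v w) i = pair_series L a b v i + pair_series L a b w i"
proof (rule fls_eqI, rule fls_eqI)
  fix l k
  have "a k (b l (hadd v w)) = hadd (a k (b l v)) (a k (b l w))"
    using hlinear_add[OF Eh_hlinear[OF b]] hlinear_add[OF Eh_hlinear[OF a]] by simp
  then show "pair_series L a b (hadd v w) i $$ l $$ k =
             (pair_series L a b v i + pair_series L a b w i) $$ l $$ k"
    by (simp add: pair_series_nth[OF a b L] hadd_def module_hom.add[OF L])
qed

lemma pair_series_hsmult:
  assumes a: "a \<in> Eh scale" and b: "b \<in> Eh scale" and L: "module_hom scale (*) L"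
  shows "pair_series L a b (hsmult scale c w) i =
         (\<Sum>j\<le>i. fls_const (fls_const (c j)) * pair_series L a b w (i - j))"
proof (rule fls_eqI, rule fls_eqI)
  fix l k
  have "a k (b l (hsmult scale c w)) = hsmult scale c (a k (b l w))"
    using hlinear_smult[OF Eh_hlinear[OF b]] hlinear_smult[OF Eh_hlinear[OF a]] by simp
  then show "pair_series L a b (hsmult scale c w) i $$ l $$ k =
      (\<Sum>j\<le>i. fls_const (fls_const (c j)) * pair_series L a b w (i - j)) $$ l $$ k"
    by (simp add: pair_series_nth[OF a b L] hsmult_def module_hom.sum[OF L] module_hom.scale[OF L]
        fls_nth_sum)
qed

lemma Ycoef_hadd:
  assumes a: "a \<in> Eh scale" and b: "b \<in> Eh scale" and F: "laurent2 F"
    and v: "fab_vanishes_below N1 F a b v i" and w: "fab_vanishes_below N2 F a b w i"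
    and vw: "fab_vanishes_below N3 F a b (hadd v w) i"
  shows "Ycoef scale p F a b m t (hadd v w) i =
         Ycoef scale p F a b m t v i + Ycoef scale p F a b m t w i"
proof (rule eq_by_functionals)
  fix L assume L: "module_hom scale (*) L"
  have "supp_ge (min N1 N2) (fls2_of F * pair_series L a b v i)"
    "supp_ge (min N1 N2) (fls2_of F * pair_series L a b w i)"
    using supp_ge_fab_series[OF a b F L v] supp_ge_fab_series[OF a b F L w] supp_ge_mono by auto
  then have "phi_subst (fls2_of F * pair_series L a b (hadd v w) i) =
      phi_subst (fls2_of F * pair_series L a b v i) + phi_subst (fls2_of F * pair_series L a b w i)"
    unfolding pair_series_add[OF a b L] distrib_left by (rule phi_subst_add)
  then show "L (Ycoef scale p F a b m t (hadd v w) i) =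
      L (Ycoef scale p F a b m t v i + Ycoef scale p F a b m t w i)"
    by (simp add: module_hom.add[OF L] functional_Ycoef[OF a b F L v] functional_Ycoef[OF a b F L w]
        functional_Ycoef[OF a b F L vw] distrib_left)
qed

lemma Ycoef_hsmult:
  assumes a: "a \<in> Eh scale" and b: "b \<in> Eh scale" and F: "laurent2 F"
    and w: "\<And>j. j \<le> i \<Longrightarrow> fab_vanishes_below N F a b w j"
    and cw: "fab_vanishes_below N' F a b (hsmult scale c w) i"
  shows "Ycoef scale p F a b m t (hsmult scale c w) i =
         (\<Sum>j\<le>i. scale (c j) (Ycoef scale p F a b m t w (i - j)))"
proof (rule eq_by_functionals)
  fix L assume L: "module_hom scale (*) L"
  define I where "I = inverse (fps_to_fls (phi_subst (fls2_of F)))"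
  define A where "A j = fls2_of F * pair_series L a b w (i - j)" for j
  have A: "supp_ge N (A j)" if "j \<le> i" for j
    unfolding A_def by (rule supp_ge_fab_series[OF a b F L w]) (use that in simp)
  have "phi_subst (fls2_of F * pair_series L a b (hsmult scale c w) i) =
        phi_subst (\<Sum>j\<le>i. fls_const (fls_const (c j)) * A j)"
    by (simp add: pair_series_hsmult[OF a b L] sum_distrib_left A_def mult_ac)
  also have "\<dots> = (\<Sum>j\<le>i. fps_const (fls_const (c j)) * phi_subst (A j))"
    using phi_subst_sum[of "{..i}" N "\<lambda>j. fls_const (fls_const (c j)) * A j"] A
      phi_subst_const_mult[OF A] supp_ge_const_mult[OF A] by simp
  finally have "I * fps_to_fls (phi_subst (fls2_of F * pair_series L a b (hsmult scale c w) i)) =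
      (\<Sum>j\<le>i. fls_const (fls_const (c j)) * (I * fps_to_fls (phi_subst (A j))))"
    by (simp add: fps_to_fls_sum fps_to_fls_const_mult sum_distrib_left mult_ac)
  then show "L (Ycoef scale p F a b m t (hsmult scale c w) i) =
      L (\<Sum>j\<le>i. scale (c j) (Ycoef scale p F a b m t w (i - j)))"
    by (simp add: functional_Ycoef[OF a b F L cw] functional_Ycoef[OF a b F L w] module_hom.sum[OF L]
        module_hom.scale[OF L] fls_nth_sum I_def A_def)
qed

abbreviation admissible :: "'v hser \<Rightarrow> 'v hser \<Rightarrow> bool" where
  "admissible a b \<equiv> \<forall>n\<ge>1. \<exists>F. pair_ok scale n a b F"

definition Y_limit :: "'v hser \<Rightarrow> 'v hser \<Rightarrow> int \<Rightarrow> 'v hser" where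
  "Y_limit a b m = (\<lambda>t w i. Ycoef scale p (SOME F. pair_ok scale (Suc i) a b F) a b m t w i)"

lemma pair_ok_some:
  assumes "admissible a b" "1 \<le> n"
  shows "pair_ok scale n a b (SOME F. pair_ok scale n a b F)"
proof -
  have "\<exists>F. pair_ok scale n a b F" using assms by blast
  then show ?thesis by (rule someI_ex)
qed

lemma Y_limit_eq_Ycoef:
  assumes a: "a \<in> Eh scale" and b: "b \<in> Eh scale" and adm: "admissible a b"
    and F: "pair_ok scale n a b F" and i: "i < n"
  shows "Y_limit a b m t w i = Ycoef scale p F a b m t w i"
  unfolding Y_limit_def
  by (rule Ycoef_indep[OF a b pair_ok_some[OF adm] pair_ok_mono[OF F]]) (use i in auto)

lemma hlinear_Y_limit:
  assumes a: "a \<in> Eh scale" and b: "b \<in> Eh scale" and adm: "admissible a b"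
  shows "hlinear scale (Y_limit a b m t)"
  unfolding hlinear_def
proof (intro conjI allI ext)
  fix v w i
  define F where "F = (SOME F. pair_ok scale (Suc i) a b F)"
  have F: "pair_ok scale (Suc i) a b F" unfolding F_def by (rule pair_ok_some[OF adm]) simp
  obtain N1 N2 N3 where "fab_vanishes_below N1 F a b v i" "fab_vanishes_below N2 F a b w i"
    "fab_vanishes_below N3 F a b (hadd v w) i"
    using pair_ok_vanishes_below[OF F] by (metis lessI)
  then show "Y_limit a b m t (hadd v w) i = hadd (Y_limit a b m t v) (Y_limit a b m t w) i"
    using Ycoef_hadd[OF a b pair_ok_laurent2[OF F]] by (simp add: Y_limit_def hadd_def F_def)
next
  fix c w i
  define F where "F = (SOME F. pair_ok scale (Suc i) a b F)"
  have F: "pair_ok scale (Suc i) a b F" unfolding F_def by (rule pair_ok_some[OF adm]) simp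
  obtain N N' where "\<forall>j<Suc i. fab_vanishes_below N F a b w j"
    "fab_vanishes_below N' F a b (hsmult scale c w) i"
    using pair_ok_vanishes_below[OF F] by (metis lessI)
  then have "Y_limit a b m t (hsmult scale c w) i =
             (\<Sum>j\<le>i. scale (c j) (Ycoef scale p F a b m t w (i - j)))"
    unfolding Y_limit_def F_def[symmetric]
    by (intro Ycoef_hsmult[OF a b pair_ok_laurent2[OF F], where N = N]) auto
  also have "\<dots> = hsmult scale c (Y_limit a b m t w) i"
    unfolding hsmult_def using Y_limit_eq_Ycoef[OF a b adm F] by simp
  finally show "Y_limit a b m t (hsmult scale c w) i = hsmult scale c (Y_limit a b m t w) i" .
qed

lemma Y_limit_in_Eh:
  assumes a: "a \<in> Eh scale" and b: "b \<in> Eh scale" and adm: "admissible a b"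
  shows "Y_limit a b m \<in> Eh scale"
proof -
  have "\<exists>T. \<forall>t<T. \<forall>i<n. Y_limit a b m t w i = 0" if n: "1 \<le> n" for n w
  proof -
    have F: "pair_ok scale n a b (SOME F. pair_ok scale n a b F)" by (rule pair_ok_some[OF adm n])
    obtain N where "\<forall>i<n. fab_vanishes_below N (SOME F. pair_ok scale n a b F) a b w i"
      using pair_ok_vanishes_below[OF F] by blast
    moreover obtain T where "\<forall>t i w. t < T \<longrightarrow> fab_vanishes_below N (SOME F. pair_ok scale n a b F) a b w i \<longrightarrow>
        Ycoef scale p (SOME F. pair_ok scale n a b F) a b m t w i = 0"
      using Ycoef_below by blast
    ultimately show ?thesis
      using Y_limit_eq_Ycoef[OF a b adm F] by (intro exI[of _ T]) auto
  qed
  then show ?thesis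
    using hlinear_Y_limit[OF a b adm] by (simp add: Eh_def)
qed

lemma Yphi_eq_Y_limit:
  assumes a: "a \<in> Eh scale" and b: "b \<in> Eh scale" and adm: "admissible a b"
  shows "Yphi scale p a b m = Y_limit a b m"
  unfolding Yphi_def
proof (rule the_equality)
  show "Y_limit a b m \<in> Eh scale \<and> (\<forall>n\<ge>1. \<forall>t w. \<forall>i<n.
      Y_limit a b m t w i = Ycoef scale p (SOME F. pair_ok scale n a b F) a b m t w i)"
    using Y_limit_in_Eh[OF a b adm] Y_limit_eq_Ycoef[OF a b adm pair_ok_some[OF adm]] by blast
next
  fix g assume "g \<in> Eh scale \<and> (\<forall>n\<ge>1. \<forall>t w. \<forall>i<n.
      g t w i = Ycoef scale p (SOME F. pair_ok scale n a b F) a b m t w i)"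
  then show "g = Y_limit a b m"
    by (auto simp: Y_limit_def fun_eq_iff)
qed

lemma Yphi_in_Eh:
  "a \<in> Eh scale \<Longrightarrow> b \<in> Eh scale \<Longrightarrow> admissible a b \<Longrightarrow> Yphi scale p a b m \<in> Eh scale"
  using Yphi_eq_Y_limit Y_limit_in_Eh by simp

lemma Yphi_eq_Ycoef:
  assumes "a \<in> Eh scale" "b \<in> Eh scale" "admissible a b" "pair_ok scale n a b F" "i < n"
  shows "Yphi scale p a b m t w i = Ycoef scale p F a b m t w i"
  using Yphi_eq_Y_limit[OF assms(1-3)] Y_limit_eq_Ycoef[OF assms] by simp

end

section \<open>Closure of \<open>[U]\<close> and \<open>\<overline>U\<close> under \<open>Y\<^sup>\<phi>\<^sub>\<E>\<close>\<close>

lemma length_two_iff: "length ks = 2 \<longleftrightarrow> (\<exists>c d. ks = [c, d])"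
  by (auto simp: numeral_2_eq_2 length_Suc_conv)

lemma pairprod_two: "pairprod 2 F [x, y] = F x y"
proof -
  have pairs: "[(i, j). i \<leftarrow> [0..<2], j \<leftarrow> [Suc i..<2]] = [(0::nat, 1::nat)]"
    by (simp add: numeral_2_eq_2 upt_rec)
  have pairser: "pairser 2 0 (Suc 0) F [c, d] = F c d" for c d
    by (simp add: pairser_def numeral_2_eq_2)
  have unitser: "unitser 2 [c, d] = (if c = 0 \<and> d = 0 then 1 else 0)" for c d :: int
    by (simp add: unitser_def numeral_2_eq_2)
  have "{ks. length ks = 2 \<and> pairser 2 0 1 F ks \<noteq> 0 \<and> unitser 2 (map2 (-) [x, y] ks) \<noteq> 0} =
        (if F x y \<noteq> 0 then {[x, y]} else {})"
    by (auto simp: length_two_iff pairser unitser split: if_splits)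
  then show ?thesis
    by (simp add: pairprod_def pairs conv_def pairser unitser)
qed

context Y_setting
begin

lemma qc_coeff_pair: "qc_coeff scale F [a, b] [k, l] w i = fab scale F a b k l w i"
proof -
  define S where "S = {(c, d). F c d \<noteq> 0 \<and> a (k - c) (b (l - d) w) i \<noteq> 0}"
  define f where "f ks = scale (pairprod 2 F ks) (opprod [a, b] (map2 (-) [k, l] ks) w i)" for ks
  have "{ks. length ks = 2 \<and> pairprod 2 F ks \<noteq> 0 \<and> opprod [a, b] (map2 (-) [k, l] ks) w i \<noteq> 0} =
        (\<lambda>(c, d). [c, d]) ` S"
    by (auto simp: length_two_iff S_def pairprod_two)
  moreover have "inj_on (\<lambda>(c, d). [c, d]) S" by (auto simp: inj_on_def)
  ultimately have "qc_coeff scale F [a, b] [k, l] w i = (\<Sum>x\<in>S. f ((\<lambda>(c, d). [c, d]) x))"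
    by (simp add: qc_coeff_def f_def sum.reindex comp_def numeral_2_eq_2[symmetric])
  also have "\<dots> = fab scale F a b k l w i"
    unfolding fab_def S_def by (rule sum.cong) (auto simp: pairprod_two f_def)
  finally show ?thesis .
qed

lemma qc_at_pair_ok:
  assumes "qc_at scale n [a, b]"
  shows "\<exists>F. pair_ok scale n a b F"
proof -
  from assms obtain F where F: "laurent2 F" "F \<noteq> (\<lambda>a b. 0)"
    and vanish: "\<forall>w. \<exists>N. \<forall>ns. length ns = length [a, b] \<longrightarrow> (\<exists>l<length [a, b]. ns ! l < N) \<longrightarrow>
      (\<forall>i<n. qc_coeff scale F [a, b] ns w i = 0)"
    unfolding qc_at_iff by blast
  show ?thesis
    unfolding pair_ok_def
  proof (intro exI[of _ F] conjI F allI)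
    fix w
    obtain N where N: "\<forall>ns. length ns = length [a, b] \<longrightarrow> (\<exists>l<length [a, b]. ns ! l < N) \<longrightarrow>
        (\<forall>i<n. qc_coeff scale F [a, b] ns w i = 0)"
      using vanish by blast
    have "fab scale F a b k l w i = 0" if "k < N \<or> l < N" "i < n" for k l i
      using N[rule_format, of "[k, l]"] that by (force simp: qc_coeff_pair less_2_cases_iff)
    then show "\<exists>N. \<forall>k l. k < N \<or> l < N \<longrightarrow> (\<forall>i<n. fab scale F a b k l w i = 0)" by blast
  qed
qed

lemma hqc_admissible: "hqc scale S \<Longrightarrow> a \<in> S \<Longrightarrow> b \<in> S \<Longrightarrow> admissible a b"
  using qc_at_pair_ok unfolding hqc_def by auto

lemma Ycoef_cong:
  "(\<And>k l. fab scale F a b k l w i = fab scale F a' b' k l w' i') \<Longrightarrow>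
   Ycoef scale p F a b m t w i = Ycoef scale p F a' b' m t w' i'"
  by (simp only: Ycoef_def subst_phi_def)

lemma Ycoef_eq_0: "(\<And>k l. fab scale F a b k l w i = 0) \<Longrightarrow> Ycoef scale p F a b m t w i = 0"
  by (simp add: Ycoef_def subst_phi_def)

lemma fab_hshift:
  assumes a: "a \<in> Eh scale"
  shows "fab scale F (\<lambda>m w. hshift ka (a m w)) (\<lambda>m w. hshift kb (b m w)) k l w i =
     (if ka + kb \<le> i then fab scale F a b k l w (i - (ka + kb)) else 0)"
proof -
  have "hshift ka (a x (hshift kb (b y w))) = hshift (ka + kb) (a x (b y w))" for x y
    using hlinear_hshift[OF Eh_hlinear[OF a]] by (simp add: hshift_hshift)
  then show ?thesis
    unfolding fab_Sum_any by (auto simp: hshift_def)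
qed

lemma pair_ok_unshift:
  assumes a: "a \<in> Eh scale"
    and F: "pair_ok scale (n + (ka + kb)) (\<lambda>m w. hshift ka (a m w)) (\<lambda>m w. hshift kb (b m w)) F"
  shows "pair_ok scale n a b F"
  unfolding pair_ok_def
proof (intro conjI allI pair_ok_laurent2[OF F] pair_ok_nonzero[OF F])
  fix w
  obtain N where
    "\<forall>i<n + (ka + kb). fab_vanishes_below N F (\<lambda>m w. hshift ka (a m w)) (\<lambda>m w. hshift kb (b m w)) w i"
    using pair_ok_vanishes_below[OF F] by blast
  then have "\<forall>i<n. fab_vanishes_below N F a b w i"
    using fab_hshift[OF a] by (metis add_diff_cancel_right' add_less_cancel_right le_add2)
  then show "\<exists>N. \<forall>k l. k < N \<or> l < N \<longrightarrow> (\<forall>i<n. fab scale F a b k l w i = 0)" by blast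
qed

lemma Yphi_hshift:
  assumes a: "a \<in> Eh scale" and b: "b \<in> Eh scale" and adm: "admissible a b"
    and adm': "admissible (\<lambda>m w. hshift ka (a m w)) (\<lambda>m w. hshift kb (b m w))"
  shows "Yphi scale p (\<lambda>m w. hshift ka (a m w)) (\<lambda>m w. hshift kb (b m w)) m =
         (\<lambda>t w. hshift (ka + kb) (Yphi scale p a b m t w))"
proof (intro ext)
  fix t w i
  define a' b' where "a' = (\<lambda>m w. hshift ka (a m w))" and "b' = (\<lambda>m w. hshift kb (b m w))"
  define F where "F = (SOME F. pair_ok scale (Suc i) a' b' F)"
  have F: "pair_ok scale (Suc i) a' b' F"
    unfolding F_def by (rule pair_ok_some) (use adm' in \<open>simp_all add: a'_def b'_def\<close>)
  have "Yphi scale p a' b' m t w i = Ycoef scale p F a' b' m t w i"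
    by (rule Yphi_eq_Ycoef[OF _ _ _ F]) (use a b adm' Eh_hshift in \<open>simp_all add: a'_def b'_def\<close>)
  also have "\<dots> = hshift (ka + kb) (Yphi scale p a b m t w) i"
  proof (cases "ka + kb \<le> i")
    case True
    then have "Suc (i - (ka + kb)) + (ka + kb) = Suc i" by simp
    then have "pair_ok scale (Suc (i - (ka + kb))) a b F"
      using pair_ok_unshift[OF a, of "Suc (i - (ka + kb))" ka kb b F] F by (simp add: a'_def b'_def)
    then have "Yphi scale p a b m t w (i - (ka + kb)) = Ycoef scale p F a b m t w (i - (ka + kb))"
      by (rule Yphi_eq_Ycoef[OF a b adm]) simp
    also have "\<dots> = Ycoef scale p F a' b' m t w i"
      by (rule Ycoef_cong) (simp add: a'_def b'_def fab_hshift[OF a] True)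
    finally show ?thesis using True by (simp add: hshift_def)
  next
    case False
    then have "Ycoef scale p F a' b' m t w i = 0"
      by (intro Ycoef_eq_0) (simp add: a'_def b'_def fab_hshift[OF a])
    then show ?thesis using False by (simp add: hshift_def)
  qed
  finally show "Yphi scale p a' b' m t w i = hshift (ka + kb) (Yphi scale p a b m t w) i" .
qed

lemma Yclosed_hsat:
  assumes UE: "U \<subseteq> Eh scale" and qc: "hqc scale U" and Y: "Yclosed scale p U"
  shows "Yclosed scale p (hsat scale U)"
  unfolding Yclosed_def
proof (intro ballI allI)
  fix a b m assume aS: "a \<in> hsat scale U" and bS: "b \<in> hsat scale U"
  then have a: "a \<in> Eh scale" and b: "b \<in> Eh scale" by (auto simp: hsat_def)
  obtain ka kb where a': "(\<lambda>m w. hshift ka (a m w)) \<in> U" and b': "(\<lambda>m w. hshift kb (b m w)) \<in> U"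
    using aS bS by (auto simp: hsat_def ssmult_hpow)
  have adm: "admissible a b" by (rule hqc_admissible[OF hqc_hsat[OF qc] aS bS])
  have "Yphi scale p (\<lambda>m w. hshift ka (a m w)) (\<lambda>m w. hshift kb (b m w)) m \<in> U"
    using Y a' b' unfolding Yclosed_def by blast
  then have "(\<lambda>t w. hshift (ka + kb) (Yphi scale p a b m t w)) \<in> U"
    by (simp only: Yphi_hshift[OF a b adm hqc_admissible[OF qc a' b']])
  then show "Yphi scale p a b m \<in> hsat scale U"
    using Yphi_in_Eh[OF a b adm] by (auto simp: hsat_def ssmult_hpow)
qed

lemma Eh_hpow_quotient:
  assumes g: "g \<in> Eh scale" and u: "u \<in> Eh scale" and agree: "\<And>t w i. i < n \<Longrightarrow> g t w i = u t w i"
  shows "(\<lambda>t w j. g t w (j + n) - u t w (j + n)) \<in> Eh scale" (is "?e \<in> _")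
proof -
  have shift: "hshift n (?e t w) = (\<lambda>s. g t w s - u t w s)" for t w
    using agree by (auto simp: hshift_def fun_eq_iff)
  have "hlinear scale (?e t)" for t
    unfolding hlinear_def
  proof (intro conjI allI)
    fix v w
    show "?e t (hadd v w) = hadd (?e t v) (?e t w)"
      using hlinear_add[OF Eh_hlinear[OF g]] hlinear_add[OF Eh_hlinear[OF u]]
      by (auto simp: hadd_def fun_eq_iff)
  next
    fix c w
    have "(\<lambda>s. g t (hsmult scale c w) s - u t (hsmult scale c w) s) =
          hsmult scale c (\<lambda>s. g t w s - u t w s)"
      using hlinear_smult[OF Eh_hlinear[OF g]] hlinear_smult[OF Eh_hlinear[OF u]]
      by (simp add: hsmult_diff)
    then have "hshift n (?e t (hsmult scale c w)) = hshift n (hsmult scale c (?e t w))"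
      by (simp only: shift hshift_hsmult)
    then show "?e t (hsmult scale c w) = hsmult scale c (?e t w)" by (rule hshift_inj)
  qed
  moreover have "\<exists>N. \<forall>t<N. \<forall>j<k. ?e t w j = 0" for k w
  proof -
    obtain N1 where "\<forall>t<N1. \<forall>i<k + n. g t w i = 0" using Eh_truncated[OF g] by blast
    moreover obtain N2 where "\<forall>t<N2. \<forall>i<k + n. u t w i = 0" using Eh_truncated[OF u] by blast
    ultimately show ?thesis by (intro exI[of _ "min N1 N2"]) auto
  qed
  ultimately show ?thesis by (simp add: Eh_def)
qed

lemma hclosure_memI:
  assumes g: "g \<in> Eh scale" and UE: "U \<subseteq> Eh scale"
    and approx: "\<And>n. \<exists>u\<in>U. \<forall>t w i. i < n \<longrightarrow> g t w i = u t w i"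
  shows "g \<in> hclosure scale U"
  unfolding hclosure_def
proof (intro CollectI conjI g allI)
  fix n
  obtain u where u: "u \<in> U" and agree: "\<And>t w i. i < n \<Longrightarrow> g t w i = u t w i"
    using approx by blast
  have "g = sadd u (ssmult scale (hpow n) (\<lambda>t w j. g t w (j + n) - u t w (j + n)))"
    using agree by (auto simp: fun_eq_iff sadd_def ssmult_hpow hadd_def hshift_def)
  then show "\<exists>u\<in>U. \<exists>e\<in>Eh scale. g = sadd u (ssmult scale (hpow n) e)"
    using u Eh_hpow_quotient[OF g _ agree] UE by blast
qed

lemma Yphi_nth_cong:
  assumes a: "a \<in> Eh scale" and b: "b \<in> Eh scale" and u: "u \<in> Eh scale" and v: "v \<in> Eh scale"
    and adm: "admissible a b" and adm': "admissible u v"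
    and au: "\<And>m w i. i < n \<Longrightarrow> a m w i = u m w i" and bv: "\<And>m w i. i < n \<Longrightarrow> b m w i = v m w i"
    and i: "i < n"
  shows "Yphi scale p a b m t w i = Yphi scale p u v m t w i"
proof -
  have fab: "fab scale F a b k l w j = fab scale F u v k l w j" if "j < n" for F k l w j
  proof -
    have "a x (b y w) j = u x (v y w) j" for x y
      using hlinear_nth_cong[OF Eh_hlinear[OF a], of j "b y w" "v y w"] au[of j] bv that by auto
    then show ?thesis by (simp add: fab_def)
  qed
  define F where "F = (SOME F. pair_ok scale n a b F)"
  have F: "pair_ok scale n a b F" unfolding F_def by (rule pair_ok_some[OF adm]) (use i in simp)
  then have F': "pair_ok scale n u v F" by (simp add: pair_ok_def fab)
  have "Yphi scale p a b m t w i = Ycoef scale p F a b m t w i"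
    by (rule Yphi_eq_Ycoef[OF a b adm F i])
  also have "\<dots> = Ycoef scale p F u v m t w i"
    by (rule Ycoef_cong) (simp add: fab i)
  also have "\<dots> = Yphi scale p u v m t w i"
    by (rule Yphi_eq_Ycoef[OF u v adm' F' i, symmetric])
  finally show ?thesis .
qed

lemma Yclosed_hclosure:
  assumes UE: "U \<subseteq> Eh scale" and qc: "hqc scale U" and Y: "Yclosed scale p U"
  shows "Yclosed scale p (hclosure scale U)"
  unfolding Yclosed_def
proof (intro ballI allI)
  fix a b m assume aS: "a \<in> hclosure scale U" and bS: "b \<in> hclosure scale U"
  then have a: "a \<in> Eh scale" and b: "b \<in> Eh scale" by (auto simp: hclosure_def)
  have adm: "admissible a b" by (rule hqc_admissible[OF hqc_hclosure[OF qc] aS bS])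
  show "Yphi scale p a b m \<in> hclosure scale U"
  proof (rule hclosure_memI[OF Yphi_in_Eh[OF a b adm] UE])
    fix n
    obtain u where u: "u \<in> U" and au: "\<forall>m w i. i < n \<longrightarrow> a m w i = u m w i"
      using hclosure_approx[OF aS] by blast
    obtain v where v: "v \<in> U" and bv: "\<forall>m w i. i < n \<longrightarrow> b m w i = v m w i"
      using hclosure_approx[OF bS] by blast
    have "Yphi scale p a b m t w i = Yphi scale p u v m t w i" if "i < n" for t w i
      using Yphi_nth_cong[OF a b _ _ adm hqc_admissible[OF qc u v]] u v UE au bv that by blast
    moreover have "Yphi scale p u v m \<in> U"
      using Y u v unfolding Yclosed_def by blast
    ultimately show "\<exists>u\<in>U. \<forall>t w i. i < n \<longrightarrow> Yphi scale p a b m t w i = u t w i"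
      by blast
  qed
qed

end

theorem lemma3p30:
  fixes sc :: "complex \<Rightarrow> 'v::ab_group_add \<Rightarrow> 'v"
    and p :: "complex fls"
    and U :: "'v hser set"
  assumes "vector_space sc"
    and "p \<noteq> 0"
    and "hsubmodule sc U"
    and "hqc sc U"
    and "Yclosed sc p U"
  shows "hqc sc (hsat sc U) \<and> Yclosed sc p (hsat sc U) \<and>
         hqc sc (hclosure sc U) \<and> Yclosed sc p (hclosure sc U)"
proof -
  interpret Y_setting sc p
    using assms(1,2) by (simp add: Y_setting_def hbar_space_def phi_flow_def)
  have "U \<subseteq> Eh sc" using assms(3) by (simp add: hsubmodule_def)
  then show ?thesis
    using hqc_hsat[OF assms(4)] Yclosed_hsat[OF _ assms(4,5)]
      hqc_hclosure[OF assms(4)] Yclosed_hclosure[OF _ assms(4,5)] by blast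
qed

end
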